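(* Let $\ell$ be a nondegenerate Hermitian form on a complex $n$-dimensional space $W$, $A$ an $\ell$-self-adjoint antilinear operator, $\lambda^2>0$ an eigenvalue of $A^2$, and $W_\lambda^{(n)}=\ker(A^2-\lambda^2 I)^n$. Suppose the restriction of $A^2$ to $W_\lambda^{(n)}$ has Jordan canonical form with exactly $r_i$ Jordan blocks of size $s_i\times s_i$ ($i=1,\dots,n_\lambda$, $s_1>s_2>\dots>s_{n_\lambda}$). Then there is a basis of $W_\lambda^{(n)}$ with respect to which the restrictions of $\ell$ and $A$ to $W_\lambda^{(n)}$ are represented by $$\bigoplus_{i=1}^{n_\lambda}\bigoplus_{j=1}^{r_i}\epsilon_{i,j}S_{s_i}\quad\text{and}\quad\bigoplus_{i=1}^{n_\lambda}\bigoplus_{j=1}^{r_i}J_{|\lambda|,s_i},$$ respectively, for some signs $\epsilon_{i,j}\in\{1,-1\}$.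
   Context: An antilinear operator satisfies $A(zv+w)=\bar zAv+Aw$; $\ell$ is linear in the first argument and conjugate-linear in the second; $A$ is $\ell$-self-adjoint if $\ell(Av,w)=\ell(Aw,v)$. The subspace $W_\lambda^{(n)}$ is $A$-invariant. In a basis $e_1,\dots,e_k$, $\ell$ is represented by $H_{i,j}=\ell(e_j,e_i)$ and $A$ by $C$ with $Ae_i=\sum_m C_{m,i}e_m$. $\bigoplus$ denotes block diagonal matrices. $S_k$ has $(i,j)$ entry $1$ if $i+j=k+1$, else $0$; $J_{\mu,k}=\mu I_k+T_k$ with $T_k$ having $(i,j)$ entry $1$ if $j-i=1$, else $0$. *)

theory Defs
  imports "Jordan_Normal_Form.Jordan_Normal_Form"
begin

text \<open>The complex n-dimensional space W is modelled as carrier_vec n (column vectors in C^n).\<close>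

definition hermitian_form :: "nat \<Rightarrow> (complex vec \<Rightarrow> complex vec \<Rightarrow> complex) \<Rightarrow> bool" where
  "hermitian_form n l \<longleftrightarrow>
     (\<forall>u\<in>carrier_vec n. \<forall>v\<in>carrier_vec n. \<forall>w\<in>carrier_vec n. \<forall>z::complex.
        l (z \<cdot>\<^sub>v u + v) w = z * l u w + l v w \<and>
        l w (z \<cdot>\<^sub>v u + v) = cnj z * l w u + l w v) \<and>
     (\<forall>u\<in>carrier_vec n. \<forall>v\<in>carrier_vec n. l u v = cnj (l v u))"

definition nondegenerate :: "nat \<Rightarrow> (complex vec \<Rightarrow> complex vec \<Rightarrow> complex) \<Rightarrow> bool" where
  "nondegenerate n l \<longleftrightarrow>
     (\<forall>u\<in>carrier_vec n. (\<forall>w\<in>carrier_vec n. l u w = 0) \<longrightarrow> u = 0\<^sub>v n)"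

definition antilinear_op :: "nat \<Rightarrow> (complex vec \<Rightarrow> complex vec) \<Rightarrow> bool" where
  "antilinear_op n A \<longleftrightarrow>
     (\<forall>u\<in>carrier_vec n. A u \<in> carrier_vec n) \<and>
     (\<forall>u\<in>carrier_vec n. \<forall>v\<in>carrier_vec n. \<forall>z::complex.
        A (z \<cdot>\<^sub>v u + v) = cnj z \<cdot>\<^sub>v A u + A v)"

definition self_adjoint_wrt :: "nat \<Rightarrow> (complex vec \<Rightarrow> complex vec \<Rightarrow> complex) \<Rightarrow> (complex vec \<Rightarrow> complex vec) \<Rightarrow> bool" where
  "self_adjoint_wrt n l A \<longleftrightarrow> (\<forall>v\<in>carrier_vec n. \<forall>w\<in>carrier_vec n. l (A v) w = l (A w) v)"

definition gen_eigenspace :: "nat \<Rightarrow> (complex vec \<Rightarrow> complex vec) \<Rightarrow> complex \<Rightarrow> complex vec set" where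
  "gen_eigenspace n A mu =
     {v \<in> carrier_vec n. ((\<lambda>u. A (A u) - mu \<cdot>\<^sub>v u) ^^ n) v = 0\<^sub>v n}"

definition lin_comb :: "nat \<Rightarrow> complex vec list \<Rightarrow> complex vec \<Rightarrow> complex vec" where
  "lin_comb n es c = vec n (\<lambda>t. \<Sum>i<length es. c $ i * (es ! i) $ t)"

definition is_basis_of :: "nat \<Rightarrow> complex vec set \<Rightarrow> complex vec list \<Rightarrow> bool" where
  "is_basis_of n U es \<longleftrightarrow> set es \<subseteq> U \<and>
     (\<forall>v\<in>U. \<exists>!c. c \<in> carrier_vec (length es) \<and> v = lin_comb n es c)"

definition form_matrix :: "(complex vec \<Rightarrow> complex vec \<Rightarrow> complex) \<Rightarrow> complex vec list \<Rightarrow> complex mat" where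
  "form_matrix l es = mat (length es) (length es) (\<lambda>(i,j). l (es ! j) (es ! i))"

definition represents_op :: "nat \<Rightarrow> complex vec list \<Rightarrow> (complex vec \<Rightarrow> complex vec) \<Rightarrow> complex mat \<Rightarrow> bool" where
  "represents_op n es B C \<longleftrightarrow> C \<in> carrier_mat (length es) (length es) \<and>
     (\<forall>i<length es. B (es ! i) = lin_comb n es (col C i))"

text \<open>S_k: (i,j) entry 1 iff i+j = k+1 (1-based), i.e. i+j = k-1 (0-based).\<close>
definition S_mat :: "nat \<Rightarrow> complex mat" where
  "S_mat k = mat k k (\<lambda>(i,j). if i + j + 1 = k then 1 else 0)"

definition block_sizes :: "(nat \<times> nat) list \<Rightarrow> nat list" where
  "block_sizes sr = concat (map (\<lambda>(s, r). replicate r s) sr)"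

end

theory Submission
  imports Defs "HOL-Computational_Algebra.Formal_Power_Series"
begin

text \<open>On U = W_\<lambda>^(n) the operator T = A^2 - \<lambda>^2 is nilpotent, so the binomial series
  of (1 + T/\<lambda>^2)^(1/2) terminates and defines a polynomial R in T with \<lambda>^2 R^2 = A^2.
  Then N = |\<lambda>| (R - 1) is nilpotent and \<ell>-self-adjoint, and K = |\<lambda>|^-1 A R^-1 is an
  \<ell>-self-adjoint antilinear involution commuting with N, with A = K (|\<lambda>| + N).

  A Gram-Schmidt type induction splits U into \<ell>-orthogonal chains N^(s-1) v, ..., N v, v
  of K-fixed vectors whose Gram matrix is \<plusminus>S_s: take s least with N^s = 0, find a K-fixed v
  with \<ell>(N^(s-1) v, v) \<noteq> 0, add real multiples of N^k v to kill the lower moments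
  \<ell>(N^k v, v), normalise, and recurse into the orthogonal complement of the chain.
  On such a chain A = K (|\<lambda>| + N) acts by the Jordan block J_{|\<lambda>|,s}.

  Finally, N^k and T^k have the same image on U (each is the other composed with a
  polynomial in T), and for a basis made of chains of lengths s_j the dimension of that
  image is \<Sum>_j (s_j - k). These numbers for all k determine the sorted list of chain
  lengths, so the chain lengths are the given Jordan block sizes of A^2.\<close>

definition vsum :: "nat \<Rightarrow> 'i set \<Rightarrow> ('i \<Rightarrow> complex vec) \<Rightarrow> complex vec" where
  "vsum n I f = vec n (\<lambda>t. \<Sum>i\<in>I. f i $ t)"

lemma vsum_carrier[simp]: "vsum n I f \<in> carrier_vec n"
  unfolding vsum_def by simp

lemma vsum_empty[simp]: "vsum n {} f = 0\<^sub>v n"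
  unfolding vsum_def by auto

lemma vsum_insert:
  assumes "finite I" "i \<notin> I" "f i \<in> carrier_vec n"
  shows "vsum n (insert i I) f = f i + vsum n I f"
  using assms unfolding vsum_def by (intro eq_vecI) auto

lemma vsum_cong: "(\<And>i. i \<in> I \<Longrightarrow> f i = g i) \<Longrightarrow> vsum n I f = vsum n I g"
  unfolding vsum_def by auto

definition vec_subspace :: "nat \<Rightarrow> complex vec set \<Rightarrow> bool" where
  "vec_subspace n S \<longleftrightarrow> S \<subseteq> carrier_vec n \<and> 0\<^sub>v n \<in> S \<and> (\<forall>u\<in>S. \<forall>v\<in>S. u + v \<in> S)
     \<and> (\<forall>z. \<forall>u\<in>S. z \<cdot>\<^sub>v u \<in> S)"

lemma vec_subspaceD:
  assumes "vec_subspace n S"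
  shows "S \<subseteq> carrier_vec n" "0\<^sub>v n \<in> S" "u \<in> S \<Longrightarrow> v \<in> S \<Longrightarrow> u + v \<in> S"
    "u \<in> S \<Longrightarrow> z \<cdot>\<^sub>v u \<in> S"
  using assms unfolding vec_subspace_def by auto

lemma vsum_in_subspace:
  assumes S: "vec_subspace n S" and f: "\<And>i. i \<in> I \<Longrightarrow> f i \<in> S" and fin: "finite I"
  shows "vsum n I f \<in> S"
  using fin f
proof (induction I rule: finite_induct)
  case empty then show ?case using vec_subspaceD[OF S] by simp
next
  case (insert i I)
  have fi: "f i \<in> carrier_vec n" using insert vec_subspaceD(1)[OF S] by auto
  show ?case unfolding vsum_insert[of I i f n, OF insert(1,2) fi]
    using insert vec_subspaceD(3)[OF S] by auto
qed

lemma additive_vsum: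
  assumes S: "vec_subspace n S" and f: "\<And>i. i \<in> I \<Longrightarrow> f i \<in> S" and fin: "finite I"
    and add: "\<And>u v. u \<in> S \<Longrightarrow> v \<in> S \<Longrightarrow> F (u + v) = F u + F v"
    and zero: "F (0\<^sub>v n) = 0\<^sub>v m"
    and Fc: "\<And>u. u \<in> S \<Longrightarrow> F u \<in> carrier_vec m"
  shows "F (vsum n I f) = vsum m I (\<lambda>i. F (f i))"
  using fin f
proof (induction I rule: finite_induct)
  case empty then show ?case using zero by simp
next
  case (insert i I)
  have fi: "f i \<in> carrier_vec n" using insert vec_subspaceD(1)[OF S] by auto
  have vs: "vsum n I f \<in> S" by (rule vsum_in_subspace[OF S]) (use insert in auto)
  have "F (vsum n (insert i I) f) = F (f i) + F (vsum n I f)"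
    unfolding vsum_insert[of I i f n, OF insert(1,2) fi]
    using insert vs add by auto
  also have "\<dots> = vsum m (insert i I) (\<lambda>i. F (f i))"
    using insert Fc by (subst vsum_insert) auto
  finally show ?case .
qed

lemma additive_vsum_scalar:
  assumes S: "vec_subspace n S" and f: "\<And>i. i \<in> I \<Longrightarrow> f i \<in> S" and fin: "finite I"
    and add: "\<And>u v. u \<in> S \<Longrightarrow> v \<in> S \<Longrightarrow> F (u + v) = F u + F v"
    and zero: "F (0\<^sub>v n) = (0::complex)"
  shows "F (vsum n I f) = (\<Sum>i\<in>I. F (f i))"
  using fin f
proof (induction I rule: finite_induct)
  case empty then show ?case using zero by simp
next
  case (insert i I)
  have fi: "f i \<in> carrier_vec n" using insert vec_subspaceD(1)[OF S] by auto
  have vs: "vsum n I f \<in> S" by (rule vsum_in_subspace[OF S]) (use insert in auto)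
  show ?case
    unfolding vsum_insert[of I i f n, OF insert(1,2) fi]
    using insert vs add by auto
qed

lemma vec_subspace_carrier: "vec_subspace n (carrier_vec n)"
  unfolding vec_subspace_def by auto

lemma lin_comb_vsum:
  assumes "set es \<subseteq> carrier_vec n"
  shows "lin_comb n es c = vsum n {..<length es} (\<lambda>i. c $ i \<cdot>\<^sub>v es ! i)"
proof (rule eq_vecI)
  have d: "\<And>x. x < length es \<Longrightarrow> dim_vec (es ! x) = n"
    using assms by (auto simp: nth_mem subset_iff carrier_vecD)
  fix i assume "i < dim_vec (vsum n {..<length es} (\<lambda>i. c $ i \<cdot>\<^sub>v es ! i))"
  hence i: "i < n" by (simp add: vsum_def)
  show "lin_comb n es c $ i = vsum n {..<length es} (\<lambda>i. c $ i \<cdot>\<^sub>v es ! i) $ i"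
    using i by (simp add: lin_comb_def vsum_def, intro sum.cong, auto simp: d)
qed (simp add: lin_comb_def vsum_def)

lemma lin_comb_carrier[simp]: "lin_comb n es c \<in> carrier_vec n"
  unfolding lin_comb_def by simp

lemma lin_comb_index: "t < n \<Longrightarrow> lin_comb n es c $ t = (\<Sum>i<length es. c $ i * es ! i $ t)"
  unfolding lin_comb_def by simp

lemma dim_lin_comb[simp]: "dim_vec (lin_comb n es c) = n"
  unfolding lin_comb_def by simp

lemma lin_comb_add:
  assumes "c \<in> carrier_vec (length es)" "d \<in> carrier_vec (length es)"
  shows "lin_comb n es (c + d) = lin_comb n es c + lin_comb n es d"
proof (rule eq_vecI)
  fix t assume "t < dim_vec (lin_comb n es c + lin_comb n es d)" hence t: "t < n" by simp
  have "lin_comb n es (c+d) $ t = (\<Sum>i<length es. c$i * es!i$t + d$i*es!i$t)"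
    using assms t by (simp add: lin_comb_index, intro sum.cong, auto simp: distrib_right)
  then show "lin_comb n es (c + d) $ t = (lin_comb n es c + lin_comb n es d) $ t"
    using t by (simp add: lin_comb_index sum.distrib)
qed simp

lemma lin_comb_smult:
  assumes "c \<in> carrier_vec (length es)"
  shows "lin_comb n es (a \<cdot>\<^sub>v c) = a \<cdot>\<^sub>v lin_comb n es c"
proof (rule eq_vecI)
  fix t assume "t < dim_vec (a \<cdot>\<^sub>v lin_comb n es c)" hence t: "t < n" by simp
  have "lin_comb n es (a \<cdot>\<^sub>v c) $ t = (\<Sum>i<length es. a * (c$i * es!i$t))"
    using assms t by (simp add: lin_comb_index, intro sum.cong, auto)
  then show "lin_comb n es (a \<cdot>\<^sub>v c) $ t = (a \<cdot>\<^sub>v lin_comb n es c) $ t"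
    using t by (simp add: lin_comb_index sum_distrib_left)
qed simp

lemma lin_comb_zero[simp]: "lin_comb n es (0\<^sub>v (length es)) = 0\<^sub>v n"
  by (intro eq_vecI) (auto simp: lin_comb_index)

lemma lin_comb_unit:
  assumes "set es \<subseteq> carrier_vec n" "i < length es"
  shows "lin_comb n es (unit_vec (length es) i) = es ! i"
proof (rule eq_vecI)
  have ei: "es ! i \<in> carrier_vec n" using assms by (auto simp: nth_mem subset_iff)
  fix t assume "t < dim_vec (es ! i)" hence t: "t < n" using ei by auto
  have "lin_comb n es (unit_vec (length es) i) $ t = (\<Sum>j<length es. (if j = i then es ! i $ t else 0))"
    unfolding lin_comb_index[OF t] using assms(2) by (intro sum.cong) auto
  also have "\<dots> = es ! i $ t" using assms(2) by simp
  finally show "lin_comb n es (unit_vec (length es) i) $ t = es ! i $ t" .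
qed (use assms in \<open>auto simp: lin_comb_def intro!: carrier_vecD[symmetric]\<close>)

lemma sum_split_add: "(\<Sum>i<a+(b::nat). f i) = (\<Sum>i<a. f i) + (\<Sum>i<b. f (a+i))"
  by (induction b) (auto simp: add.assoc)

lemma lin_comb_append:
  "lin_comb n (xs @ ys) c = lin_comb n xs (vec (length xs) (\<lambda>i. c $ i))
      + lin_comb n ys (vec (length ys) (\<lambda>i. c $ (length xs + i)))"
proof (rule eq_vecI)
  fix t assume "t < dim_vec (lin_comb n xs (vec (length xs) (($) c)) +
               lin_comb n ys (vec (length ys) (\<lambda>i. c $ (length xs + i))))"
  hence t: "t < n" by (simp add: lin_comb_def)
  have "lin_comb n (xs @ ys) c $ t = (\<Sum>i<length xs + length ys. c $ i * (xs @ ys) ! i $ t)"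
    using t by (simp add: lin_comb_index)
  also have "\<dots> = (\<Sum>i<length xs. c $ i * (xs @ ys) ! i $ t) +
      (\<Sum>i<length ys. c $ (length xs + i) * (xs @ ys) ! (length xs + i) $ t)"
    by (rule sum_split_add)
  also have "\<dots> = (\<Sum>i<length xs. c $ i * xs ! i $ t) +
      (\<Sum>i<length ys. c $ (length xs + i) * ys ! i $ t)"
    by (auto intro!: sum.cong simp: nth_append)
  finally show "lin_comb n (xs @ ys) c $ t = (lin_comb n xs (vec (length xs) (\<lambda>i. c $ i))
      + lin_comb n ys (vec (length ys) (\<lambda>i. c $ (length xs + i)))) $ t"
    using t by (simp add: lin_comb_index)
qed (simp add: lin_comb_def)

lemma lin_comb_append_vec:
  assumes "c1 \<in> carrier_vec (length xs)" "c2 \<in> carrier_vec (length ys)"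
  shows "lin_comb n (xs @ ys) (c1 @\<^sub>v c2) = lin_comb n xs c1 + lin_comb n ys c2"
proof -
  have 1: "vec (length xs) (\<lambda>i. (c1 @\<^sub>v c2) $ i) = c1"
    using assms by (intro eq_vecI) (auto simp: index_append_vec)
  have 2: "vec (length ys) (\<lambda>i. (c1 @\<^sub>v c2) $ (length xs + i)) = c2"
    using assms by (intro eq_vecI) (auto simp: index_append_vec)
  show ?thesis unfolding lin_comb_append 1 2 ..
qed

lemma lin_comb_in_subspace:
  assumes S: "vec_subspace n S" and es: "set es \<subseteq> S"
  shows "lin_comb n es c \<in> S"
proof -
  have "set es \<subseteq> carrier_vec n" using es vec_subspaceD(1)[OF S] by auto
  then have eq: "lin_comb n es c = vsum n {..<length es} (\<lambda>i. c $ i \<cdot>\<^sub>v es ! i)"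
    by (rule lin_comb_vsum)
  have "vsum n {..<length es} (\<lambda>i. c $ i \<cdot>\<^sub>v es ! i) \<in> S"
    using es by (intro vsum_in_subspace[OF S]) (auto intro!: vec_subspaceD(4)[OF S] simp: nth_mem subset_iff)
  then show ?thesis using eq by simp
qed

lemma hermitian_left: "hermitian_form n l \<Longrightarrow> u \<in> carrier_vec n \<Longrightarrow> v \<in> carrier_vec n \<Longrightarrow>
   w \<in> carrier_vec n \<Longrightarrow> l (z \<cdot>\<^sub>v u + v) w = z * l u w + l v w"
  unfolding hermitian_form_def by blast

lemma hermitian_right: "hermitian_form n l \<Longrightarrow> u \<in> carrier_vec n \<Longrightarrow> v \<in> carrier_vec n \<Longrightarrow>
   w \<in> carrier_vec n \<Longrightarrow> l w (z \<cdot>\<^sub>v u + v) = cnj z * l w u + l w v"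
  unfolding hermitian_form_def by blast

lemma hermitian_add_left: "hermitian_form n l \<Longrightarrow> u \<in> carrier_vec n \<Longrightarrow> v \<in> carrier_vec n \<Longrightarrow>
   w \<in> carrier_vec n \<Longrightarrow> l (u + v) w = l u w + l v w"
  using hermitian_left[of n l u v w 1] by simp

lemma hermitian_add_right: "hermitian_form n l \<Longrightarrow> u \<in> carrier_vec n \<Longrightarrow> v \<in> carrier_vec n \<Longrightarrow>
   w \<in> carrier_vec n \<Longrightarrow> l w (u + v) = l w u + l w v"
  using hermitian_right[of n l u v w 1] by simp

lemma hermitian_zero_left: "hermitian_form n l \<Longrightarrow> w \<in> carrier_vec n \<Longrightarrow> l (0\<^sub>v n) w = 0"
  using hermitian_add_left[of n l "0\<^sub>v n" "0\<^sub>v n" w] by simp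

lemma hermitian_zero_right: "hermitian_form n l \<Longrightarrow> w \<in> carrier_vec n \<Longrightarrow> l w (0\<^sub>v n) = 0"
  using hermitian_add_right[of n l "0\<^sub>v n" "0\<^sub>v n" w] by simp

lemma hermitian_smult_left: "hermitian_form n l \<Longrightarrow> u \<in> carrier_vec n \<Longrightarrow> w \<in> carrier_vec n \<Longrightarrow>
   l (z \<cdot>\<^sub>v u) w = z * l u w"
  using hermitian_left[of n l u "0\<^sub>v n" w z] hermitian_zero_left[of n l w] by simp

lemma hermitian_smult_right: "hermitian_form n l \<Longrightarrow> u \<in> carrier_vec n \<Longrightarrow> w \<in> carrier_vec n \<Longrightarrow>
   l w (z \<cdot>\<^sub>v u) = cnj z * l w u"
  using hermitian_right[of n l u "0\<^sub>v n" w z] hermitian_zero_right[of n l w] by simp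

lemma hermitian_conj_sym: "hermitian_form n l \<Longrightarrow> u \<in> carrier_vec n \<Longrightarrow> w \<in> carrier_vec n \<Longrightarrow>
   l u w = cnj (l w u)"
  unfolding hermitian_form_def by blast

lemma hermitian_lin_comb_left:
  assumes h: "hermitian_form n l" and es: "set es \<subseteq> carrier_vec n" and w: "w \<in> carrier_vec n"
  shows "l (lin_comb n es c) w = (\<Sum>i<length es. c $ i * l (es ! i) w)"
proof -
  have "l (lin_comb n es c) w = (\<Sum>i<length es. l (c $ i \<cdot>\<^sub>v es ! i) w)"
    unfolding lin_comb_vsum[OF es]
    by (rule additive_vsum_scalar[OF vec_subspace_carrier]) (use es w in \<open>auto simp: nth_mem subset_iff hermitian_add_left[OF h] hermitian_zero_left[OF h]\<close>)
  also have "\<dots> = (\<Sum>i<length es. c $ i * l (es ! i) w)"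
    using es w by (intro sum.cong) (auto simp: hermitian_smult_left[OF h] nth_mem subset_iff)
  finally show ?thesis .
qed

lemma hermitian_lin_comb_right:
  assumes h: "hermitian_form n l" and es: "set es \<subseteq> carrier_vec n" and w: "w \<in> carrier_vec n"
  shows "l w (lin_comb n es c) = (\<Sum>i<length es. cnj (c $ i) * l w (es ! i))"
proof -
  have "l w (lin_comb n es c) = (\<Sum>i<length es. l w (c $ i \<cdot>\<^sub>v es ! i))"
    unfolding lin_comb_vsum[OF es]
    by (rule additive_vsum_scalar[OF vec_subspace_carrier, where F="\<lambda>x. l w x"]) (use es w in \<open>auto simp: nth_mem subset_iff hermitian_add_right[OF h] hermitian_zero_right[OF h]\<close>)
  also have "\<dots> = (\<Sum>i<length es. cnj (c $ i) * l w (es ! i))"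
    using es w by (intro sum.cong) (auto simp: hermitian_smult_right[OF h] nth_mem subset_iff)
  finally show ?thesis .
qed

definition linear_on :: "nat \<Rightarrow> complex vec set \<Rightarrow> (complex vec \<Rightarrow> complex vec) \<Rightarrow> bool" where
  "linear_on n S F \<longleftrightarrow> (\<forall>u\<in>S. F u \<in> S) \<and> (\<forall>u\<in>S. \<forall>v\<in>S. F (u + v) = F u + F v)
     \<and> (\<forall>z. \<forall>u\<in>S. F (z \<cdot>\<^sub>v u) = z \<cdot>\<^sub>v F u)"

definition antilinear_on :: "nat \<Rightarrow> complex vec set \<Rightarrow> (complex vec \<Rightarrow> complex vec) \<Rightarrow> bool" where
  "antilinear_on n S F \<longleftrightarrow> (\<forall>u\<in>S. F u \<in> S) \<and> (\<forall>u\<in>S. \<forall>v\<in>S. F (u + v) = F u + F v)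
     \<and> (\<forall>z. \<forall>u\<in>S. F (z \<cdot>\<^sub>v u) = cnj z \<cdot>\<^sub>v F u)"

lemma linear_onD:
  assumes "linear_on n S F"
  shows "u \<in> S \<Longrightarrow> F u \<in> S" "u \<in> S \<Longrightarrow> v \<in> S \<Longrightarrow> F (u + v) = F u + F v"
    "u \<in> S \<Longrightarrow> F (z \<cdot>\<^sub>v u) = z \<cdot>\<^sub>v F u"
  using assms unfolding linear_on_def by auto

lemma antilinear_onD:
  assumes "antilinear_on n S F"
  shows "u \<in> S \<Longrightarrow> F u \<in> S" "u \<in> S \<Longrightarrow> v \<in> S \<Longrightarrow> F (u + v) = F u + F v"
    "u \<in> S \<Longrightarrow> F (z \<cdot>\<^sub>v u) = cnj z \<cdot>\<^sub>v F u"
  using assms unfolding antilinear_on_def by auto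

lemma zero_smult_vec: "(x::complex vec) \<in> carrier_vec n \<Longrightarrow> 0 \<cdot>\<^sub>v x = 0\<^sub>v n"
  by (intro eq_vecI) auto

lemma smult_zero_vec: "z \<cdot>\<^sub>v (0\<^sub>v n) = (0\<^sub>v n :: complex vec)"
  by (intro eq_vecI) auto

lemma linear_on_zero:
  assumes S: "vec_subspace n S" and F: "linear_on n S F"
  shows "F (0\<^sub>v n) = 0\<^sub>v n"
proof -
  have "F (0\<^sub>v n) = F (0 \<cdot>\<^sub>v 0\<^sub>v n)" by (simp add: smult_zero_vec)
  also have "\<dots> = 0 \<cdot>\<^sub>v F (0\<^sub>v n)" using linear_onD(3)[OF F vec_subspaceD(2)[OF S]] .
  finally show ?thesis
    using linear_onD(1)[OF F vec_subspaceD(2)[OF S]] vec_subspaceD(1)[OF S] zero_smult_vec by auto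
qed

lemma linear_on_lin_comb:
  assumes S: "vec_subspace n S" and F: "linear_on n S F" and es: "set es \<subseteq> S"
  shows "F (lin_comb n es c) = lin_comb n (map F es) c"
proof -
  have esc: "set es \<subseteq> carrier_vec n" using es vec_subspaceD(1)[OF S] by auto
  have Fes: "set (map F es) \<subseteq> carrier_vec n" using es linear_onD(1)[OF F] vec_subspaceD(1)[OF S] by auto
  have "F (lin_comb n es c) = vsum n {..<length es} (\<lambda>i. F (c $ i \<cdot>\<^sub>v es ! i))"
    unfolding lin_comb_vsum[OF esc]
    by (rule additive_vsum[OF S]) (use es in \<open>auto intro!: vec_subspaceD(4)[OF S] linear_onD(2)[OF F]
      linear_on_zero[OF S F] simp: nth_mem subset_iff  intro: linear_onD(1)[OF F] vec_subspaceD(1)[OF S, THEN subsetD]\<close>)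
  also have "\<dots> = vsum n {..<length es} (\<lambda>i. c $ i \<cdot>\<^sub>v (map F es) ! i)"
    using es by (intro vsum_cong) (auto simp: linear_onD(3)[OF F] nth_mem subset_iff)
  also have "\<dots> = lin_comb n (map F es) c" unfolding lin_comb_vsum[OF Fes] by simp
  finally show ?thesis .
qed

lemma linear_on_comp:
  assumes "linear_on n S F" "linear_on n S G" shows "linear_on n S (F \<circ> G)"
  using assms unfolding linear_on_def by auto

lemma linear_on_id: "linear_on n S id" unfolding linear_on_def by auto

lemma linear_on_funpow: "linear_on n S F \<Longrightarrow> linear_on n S (F ^^ k)"
  by (induction k) (auto intro: linear_on_comp linear_on_id)

lemma long_list_dependent:
  assumes vs: "set vs \<subseteq> carrier_vec n" and len: "length vs > n"
  shows "\<exists>c\<in>carrier_vec (length vs). c \<noteq> 0\<^sub>v (length vs) \<and> lin_comb n vs c = 0\<^sub>v n"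
proof -
  define m where "m = length vs"
  define M :: "complex mat" where "M = mat m m (\<lambda>(i,j). if j < n then vs ! i $ j else 0)"
  have M: "M \<in> carrier_mat m m" unfolding M_def by auto
  have "M *\<^sub>v unit_vec m n = 0\<^sub>v m"
    using len unfolding m_def
    by (intro eq_vecI) (auto simp: M_def m_def scalar_prod_def unit_vec_def intro!: sum.neutral)
  moreover have "unit_vec m n \<noteq> 0\<^sub>v m" using len m_def by simp
  ultimately have "det M = 0" using det_0_iff_vec_prod_zero[OF M]
    by (metis unit_vec_carrier)
  hence "det (transpose_mat M) = 0" using det_transpose[OF M] by simp
  then obtain c where c: "c \<in> carrier_vec m" "c \<noteq> 0\<^sub>v m" "transpose_mat M *\<^sub>v c = 0\<^sub>v m"
    using det_0_iff_vec_prod_zero[of "transpose_mat M" m] M by auto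
  have "lin_comb n vs c = 0\<^sub>v n"
  proof (rule eq_vecI)
    fix t assume "t < dim_vec (0\<^sub>v n :: complex vec)" hence t: "t < n" by simp
    have tm: "t < m" using t len m_def by simp
    have "(transpose_mat M *\<^sub>v c) $ t = 0" using c(3) tm by simp
    hence "(\<Sum>i<m. c $ i * vs ! i $ t) = 0"
      using t tm c(1) unfolding M_def
      by (auto simp: scalar_prod_def lessThan_atLeast0 mult.commute intro!: sum.cong)
    thus "lin_comb n vs c $ t = 0\<^sub>v n $ t" using t m_def by (simp add: lin_comb_index)
  qed (simp add: lin_comb_def)
  thus ?thesis using c m_def by auto
qed

definition indep_vecs :: "nat \<Rightarrow> complex vec list \<Rightarrow> bool" where
  "indep_vecs n es \<longleftrightarrow> (\<forall>c\<in>carrier_vec (length es). lin_comb n es c = 0\<^sub>v n \<longrightarrow> c = 0\<^sub>v (length es))"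

lemma indep_vecs_length_le:
  assumes "set es \<subseteq> carrier_vec n" "indep_vecs n es"
  shows "length es \<le> n"
  using long_list_dependent[OF assms(1)] assms(2) unfolding indep_vecs_def by force

lemma lin_comb_lin_comb:
  assumes ys: "set ys \<subseteq> carrier_vec n" and Cs: "\<And>i. i < p \<Longrightarrow> Cs i \<in> carrier_vec q"
    and q: "q = length ys"
  shows "lin_comb n (map (\<lambda>i. lin_comb n ys (Cs i)) [0..<p]) a
     = lin_comb n ys (lin_comb q (map Cs [0..<p]) a)"
proof (rule eq_vecI)
  fix t assume "t < dim_vec (lin_comb n ys (lin_comb q (map Cs [0..<p]) a))"
  hence t: "t < n" by (simp add: lin_comb_def)
  have "lin_comb n (map (\<lambda>i. lin_comb n ys (Cs i)) [0..<p]) a $ t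
     = (\<Sum>i<p. a $ i * (\<Sum>j<length ys. Cs i $ j * ys ! j $ t))"
    using t by (simp add: lin_comb_index)
  also have "\<dots> = (\<Sum>j<length ys. (\<Sum>i<p. a $ i * Cs i $ j) * ys ! j $ t)"
    by (simp add: sum_distrib_left sum_distrib_right mult.assoc mult.left_commute sum.swap[of _ "{..<p}"])
  also have "\<dots> = lin_comb n ys (lin_comb q (map Cs [0..<p]) a) $ t"
    using t q by (simp add: lin_comb_index)
  finally show "lin_comb n (map (\<lambda>i. lin_comb n ys (Cs i)) [0..<p]) a $ t
     = lin_comb n ys (lin_comb q (map Cs [0..<p]) a) $ t" .
qed (simp add: lin_comb_def)

lemma indep_vecs_length_le_span:
  assumes xs: "set xs \<subseteq> carrier_vec n" and ind: "indep_vecs n xs"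
    and ys: "set ys \<subseteq> carrier_vec n"
    and span: "\<And>x. x \<in> set xs \<Longrightarrow> \<exists>c\<in>carrier_vec (length ys). x = lin_comb n ys c"
  shows "length xs \<le> length ys"
proof (rule ccontr)
  assume "\<not> ?thesis" hence gt: "length xs > length ys" by simp
  define p where "p = length xs"
  define q where "q = length ys"
  have "\<forall>i<p. \<exists>c\<in>carrier_vec q. xs ! i = lin_comb n ys c"
    using span unfolding p_def q_def by (auto simp: nth_mem)
  then obtain Cs where Cs: "\<And>i. i < p \<Longrightarrow> Cs i \<in> carrier_vec q \<and> xs ! i = lin_comb n ys (Cs i)"
    by metis
  have xs_eq: "xs = map (\<lambda>i. lin_comb n ys (Cs i)) [0..<p]"
    unfolding p_def by (rule nth_equalityI) (use Cs p_def in auto)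
  have "set (map Cs [0..<p]) \<subseteq> carrier_vec q" using Cs by auto
  from long_list_dependent[OF this] gt
  obtain a where a: "a \<in> carrier_vec p" "a \<noteq> 0\<^sub>v p" "lin_comb q (map Cs [0..<p]) a = 0\<^sub>v q"
    unfolding p_def q_def by auto
  have "lin_comb n xs a = lin_comb n ys (lin_comb q (map Cs [0..<p]) a)"
    unfolding xs_eq by (rule lin_comb_lin_comb[OF ys]) (use Cs q_def in auto)
  also have "\<dots> = 0\<^sub>v n" using a(3) q_def by simp
  finally have "lin_comb n xs a = 0\<^sub>v n" .
  with ind a show False unfolding indep_vecs_def p_def by auto
qed

lemma is_basis_of_indep:
  assumes "is_basis_of n Y es" "0\<^sub>v n \<in> Y"
  shows "indep_vecs n es"
  unfolding indep_vecs_def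
proof (intro ballI impI)
  fix c assume c: "c \<in> carrier_vec (length es)" "lin_comb n es c = 0\<^sub>v n"
  have "\<exists>!c. c \<in> carrier_vec (length es) \<and> 0\<^sub>v n = lin_comb n es c"
    using assms unfolding is_basis_of_def by auto
  moreover have "0\<^sub>v (length es) \<in> carrier_vec (length es) \<and> 0\<^sub>v n = lin_comb n es (0\<^sub>v (length es))"
    by simp
  ultimately show "c = 0\<^sub>v (length es)" using c by metis
qed

lemma is_basis_ofI:
  assumes S: "set es \<subseteq> Y" "set es \<subseteq> carrier_vec n" and ind: "indep_vecs n es"
    and span: "\<And>v. v \<in> Y \<Longrightarrow> \<exists>c\<in>carrier_vec (length es). v = lin_comb n es c"
  shows "is_basis_of n Y es"
  unfolding is_basis_of_def
proof (intro conjI ballI S(1))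
  fix v assume v: "v \<in> Y"
  then obtain c where c: "c \<in> carrier_vec (length es)" "v = lin_comb n es c" using span by auto
  show "\<exists>!c. c \<in> carrier_vec (length es) \<and> v = lin_comb n es c"
  proof (rule ex1I[of _ c])
    fix d assume d: "d \<in> carrier_vec (length es) \<and> v = lin_comb n es d"
    have "lin_comb n es (d + (-1) \<cdot>\<^sub>v c) = lin_comb n es c + (-1) \<cdot>\<^sub>v lin_comb n es c"
      using c d by (simp add: lin_comb_add lin_comb_smult)
    also have "\<dots> = 0\<^sub>v n" by (intro eq_vecI) auto
    finally have "lin_comb n es (d + (-1) \<cdot>\<^sub>v c) = 0\<^sub>v n" .
    hence "d + (-1) \<cdot>\<^sub>v c = 0\<^sub>v (length es)" using ind d c unfolding indep_vecs_def by auto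
    hence "\<And>i. i < length es \<Longrightarrow> d $ i + (-1) * c $ i = 0"
      using c d by (metis carrier_vecD index_add_vec(1) index_smult_vec(1,2) index_zero_vec(1))
    thus "d = c" using c d by (intro eq_vecI) auto
  qed (use c in auto)
qed

lemma indep_vecs_Nil: "indep_vecs n []"
  unfolding indep_vecs_def by (auto intro: eq_vecI)

lemma is_basis_of_Nil: "(\<forall>y\<in>Y. y = 0\<^sub>v n) \<Longrightarrow> is_basis_of n Y []"
proof (rule is_basis_ofI)
  show "indep_vecs n []" by (rule indep_vecs_Nil)
  fix v assume "\<forall>y\<in>Y. y = 0\<^sub>v n" "v \<in> Y"
  thus "\<exists>c\<in>carrier_vec (length []). v = lin_comb n [] c"
    by (intro bexI[of _ "0\<^sub>v 0"]) (auto simp: lin_comb_def simp flip: zero_vec_def)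
qed auto

lemma is_basis_of_span: "is_basis_of n Y es \<Longrightarrow> x \<in> Y \<Longrightarrow> \<exists>c\<in>carrier_vec (length es). x = lin_comb n es c"
  unfolding is_basis_of_def by blast

lemma least_nonzero_index:
  assumes "c \<in> carrier_vec m" "c \<noteq> 0\<^sub>v m"
  obtains j where "j < m" "c $ j \<noteq> 0" "\<And>k. k < j \<Longrightarrow> c $ k = 0"
proof -
  have "\<exists>k<m. c $ k \<noteq> 0" using assms by (metis eq_vecI carrier_vecD index_zero_vec)
  then obtain k where k: "k < m" "c $ k \<noteq> 0" by auto
  define j where "j = (LEAST k. c $ k \<noteq> 0)"
  have "c $ j \<noteq> 0" unfolding j_def by (rule LeastI[of "\<lambda>k. c $ k \<noteq> 0", OF k(2)])
  moreover have "j \<le> k" unfolding j_def using k(2) by (rule Least_le)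
  moreover have "\<And>i. i < j \<Longrightarrow> c $ i = 0" unfolding j_def using not_less_Least by blast
  ultimately show ?thesis using that k(1) by (meson le_less_trans)
qed

text \<open>A linear dependence among x, F x, ..., F^n x whose lowest nonzero coefficient sits at
  F^j x expresses F^j x through higher powers.\<close>
lemma funpow_in_range_funpow_Suc:
  assumes F: "linear_on n (carrier_vec n) F" and x: "x \<in> carrier_vec n"
  shows "\<exists>j\<le>n. \<exists>z\<in>carrier_vec n. (F ^^ j) x = (F ^^ Suc j) z"
proof -
  define vs where "vs = map (\<lambda>k. (F ^^ k) x) [0..<Suc n]"
  have vsc: "set vs \<subseteq> carrier_vec n" unfolding vs_def using x linear_onD(1)[OF linear_on_funpow[OF F]] by auto
  obtain c where c: "c \<in> carrier_vec (Suc n)" "c \<noteq> 0\<^sub>v (Suc n)" "lin_comb n vs c = 0\<^sub>v n"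
    using long_list_dependent[OF vsc] unfolding vs_def by auto
  obtain j where j: "j < Suc n" "c $ j \<noteq> 0" "\<And>k. k < j \<Longrightarrow> c $ k = 0"
    using least_nonzero_index[OF c(1,2)] by blast
  define ws where "ws = map (\<lambda>k. (F ^^ k) x) [0..<n - j]"
  define d where "d = vec (n - j) (\<lambda>k. - c $ (j + 1 + k) / c $ j)"
  define z where "z = lin_comb n ws d"
  have wsc: "set ws \<subseteq> carrier_vec n" unfolding ws_def using x linear_onD(1)[OF linear_on_funpow[OF F]] by auto
  have Fz: "(F ^^ Suc j) z = lin_comb n (map (\<lambda>k. (F ^^ (j + 1 + k)) x) [0..<n - j]) d"
    unfolding z_def linear_on_lin_comb[OF vec_subspace_carrier linear_on_funpow[OF F] wsc]
    by (simp add: ws_def comp_def funpow_add)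
  have "(F ^^ j) x = (F ^^ Suc j) z"
  proof (rule eq_vecI)
    fix t assume "t < dim_vec ((F ^^ Suc j) z)" hence t: "t < n" unfolding Fz by simp
    define f where "f = (\<lambda>k. c $ k * (F ^^ k) x $ t)"
    have "0 = lin_comb n vs c $ t" using c(3) t by simp
    also have "\<dots> = (\<Sum>k<j + 1. f k) + (\<Sum>k<n - j. f (j + 1 + k))"
      using t sum_split_add[of f "j + 1" "n - j"] j(1)
      by (simp add: vs_def f_def lin_comb_index del: upt_Suc)
    also have "(\<Sum>k<j + 1. f k) = c $ j * (F ^^ j) x $ t"
      using j(3) unfolding f_def by (simp add: lessThan_Suc)
    also have "(\<Sum>k<n - j. f (j + 1 + k)) = - c $ j * (F ^^ Suc j) z $ t"
      unfolding Fz f_def using t j(2) by (simp add: lin_comb_index d_def sum_distrib_left)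
    finally show "(F ^^ j) x $ t = (F ^^ Suc j) z $ t" using j(2) by (simp add: algebra_simps)
  next
    have "(F ^^ j) x \<in> carrier_vec n" using x linear_onD(1)[OF linear_on_funpow[OF F]] by simp
    then show "dim_vec ((F ^^ j) x) = dim_vec ((F ^^ Suc j) z)" unfolding Fz by simp
  qed
  moreover have "z \<in> carrier_vec n" unfolding z_def by simp
  ultimately show ?thesis using j(1) by (meson less_Suc_eq_le)
qed

section \<open>The generalised eigenspace of \<open>A\<^sup>2\<close>\<close>

locale antilinear_selfadjoint =
  fixes n :: nat and l :: "complex vec \<Rightarrow> complex vec \<Rightarrow> complex"
    and A :: "complex vec \<Rightarrow> complex vec" and lam :: real
  assumes herm: "hermitian_form n l"
    and nondeg: "nondegenerate n l"
    and anti: "antilinear_op n A"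
    and sa: "self_adjoint_wrt n l A"
    and pos: "lam\<^sup>2 > 0"
begin

definition mu :: complex where "mu = complex_of_real (lam\<^sup>2)"

definition T :: "complex vec \<Rightarrow> complex vec" where "T v = A (A v) - mu \<cdot>\<^sub>v v"

definition U :: "complex vec set" where "U = gen_eigenspace n A mu"

lemma cnj_mu[simp]: "cnj mu = mu" unfolding mu_def by simp

lemma A_carrier[simp]: "u \<in> carrier_vec n \<Longrightarrow> A u \<in> carrier_vec n"
  using anti unfolding antilinear_op_def by auto

lemma A_dim[simp]: "u \<in> carrier_vec n \<Longrightarrow> dim_vec (A u) = n"
  using A_carrier carrier_vecD by blast

lemma A_antilinear: "u \<in> carrier_vec n \<Longrightarrow> v \<in> carrier_vec n \<Longrightarrow> A (z \<cdot>\<^sub>v u + v) = cnj z \<cdot>\<^sub>v A u + A v"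
  using anti unfolding antilinear_op_def by blast

lemma A_add: "u \<in> carrier_vec n \<Longrightarrow> v \<in> carrier_vec n \<Longrightarrow> A (u + v) = A u + A v"
  using A_antilinear[of u v 1] by simp

lemma A_zero[simp]: "A (0\<^sub>v n) = 0\<^sub>v n"
proof -
  have "A (0\<^sub>v n) = A ((-1) \<cdot>\<^sub>v 0\<^sub>v n + 0\<^sub>v n)" by (simp add: smult_zero_vec)
  also have "\<dots> = (-1) \<cdot>\<^sub>v A (0\<^sub>v n) + A (0\<^sub>v n)" by (subst A_antilinear) auto
  also have "\<dots> = 0\<^sub>v n" by (intro eq_vecI) auto
  finally show ?thesis .
qed

lemma A_smult: "u \<in> carrier_vec n \<Longrightarrow> A (z \<cdot>\<^sub>v u) = cnj z \<cdot>\<^sub>v A u"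
  using A_antilinear[of u "0\<^sub>v n" z] by simp

lemma T_carrier[simp]: "u \<in> carrier_vec n \<Longrightarrow> T u \<in> carrier_vec n"
  unfolding T_def by simp

lemma linear_T: "linear_on n (carrier_vec n) T"
  unfolding linear_on_def
proof (intro conjI ballI allI)
  fix u v :: "complex vec" assume u: "u \<in> carrier_vec n" and v: "v \<in> carrier_vec n"
  show "T (u + v) = T u + T v" unfolding T_def using u v
    by (simp add: A_add) (intro eq_vecI, auto simp: algebra_simps)
next
  fix z and u :: "complex vec" assume u: "u \<in> carrier_vec n"
  show "T (z \<cdot>\<^sub>v u) = z \<cdot>\<^sub>v T u" unfolding T_def using u
    by (simp add: A_smult) (intro eq_vecI, auto simp: algebra_simps)
qed simp

lemma linear_Tk: "linear_on n (carrier_vec n) (T ^^ k)"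
  using linear_on_funpow[OF linear_T] .

lemma Tk_carrier[simp]: "u \<in> carrier_vec n \<Longrightarrow> (T ^^ k) u \<in> carrier_vec n"
  using linear_onD(1)[OF linear_Tk] by simp

lemma T_dim[simp]: "u \<in> carrier_vec n \<Longrightarrow> dim_vec (T u) = n"
  using T_carrier carrier_vecD by blast

lemma Tk_dim[simp]: "u \<in> carrier_vec n \<Longrightarrow> dim_vec ((T ^^ k) u) = n"
  using Tk_carrier carrier_vecD by blast

lemma Tk_zero[simp]: "(T ^^ k) (0\<^sub>v n) = 0\<^sub>v n"
  using linear_on_zero[OF vec_subspace_carrier linear_Tk] .

lemma A_diff: "u \<in> carrier_vec n \<Longrightarrow> v \<in> carrier_vec n \<Longrightarrow> A (u - v) = A u - A v"
proof -
  assume u: "u \<in> carrier_vec n" and v: "v \<in> carrier_vec n"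
  have "u - v = u + (-1) \<cdot>\<^sub>v v" using u v by (intro eq_vecI) auto
  hence "A (u - v) = A u + (-1) \<cdot>\<^sub>v A v" using u v by (simp add: A_add A_smult)
  also have "\<dots> = A u - A v" using u v by (intro eq_vecI) auto
  finally show ?thesis .
qed

lemma T_A_commute: "u \<in> carrier_vec n \<Longrightarrow> T (A u) = A (T u)"
  unfolding T_def by (simp add: A_diff A_smult)

lemma Tk_A_commute: "u \<in> carrier_vec n \<Longrightarrow> (T ^^ k) (A u) = A ((T ^^ k) u)"
  by (induction k) (auto simp: T_A_commute)

lemma U_eq: "U = {v \<in> carrier_vec n. (T ^^ n) v = 0\<^sub>v n}"
proof -
  have "(\<lambda>u. A (A u) - mu \<cdot>\<^sub>v u) = T" unfolding T_def by auto
  thus ?thesis unfolding U_def gen_eigenspace_def by simp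
qed

lemma vec_subspace_U: "vec_subspace n U"
  unfolding vec_subspace_def U_eq
proof (intro conjI ballI allI)
  fix u v assume u: "u \<in> {v \<in> carrier_vec n. (T ^^ n) v = 0\<^sub>v n}" and v: "v \<in> {v \<in> carrier_vec n. (T ^^ n) v = 0\<^sub>v n}"
  have "(T ^^ n) (u + v) = (T ^^ n) u + (T ^^ n) v" using u v linear_onD(2)[OF linear_Tk] by simp
  thus "u + v \<in> {v \<in> carrier_vec n. (T ^^ n) v = 0\<^sub>v n}" using u v by simp
next
  fix z u assume u: "u \<in> {v \<in> carrier_vec n. (T ^^ n) v = 0\<^sub>v n}"
  have "(T ^^ n) (z \<cdot>\<^sub>v u) = z \<cdot>\<^sub>v (T ^^ n) u" using u linear_onD(3)[OF linear_Tk] by simp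
  thus "z \<cdot>\<^sub>v u \<in> {v \<in> carrier_vec n. (T ^^ n) v = 0\<^sub>v n}" using u smult_zero_vec by simp
qed auto

lemma U_carrier: "u \<in> U \<Longrightarrow> u \<in> carrier_vec n"
  unfolding U_eq by auto

lemma A_U: "u \<in> U \<Longrightarrow> A u \<in> U"
  unfolding U_eq by (auto simp: Tk_A_commute)

lemma T_U: "u \<in> U \<Longrightarrow> T u \<in> U"
proof -
  assume u: "u \<in> U"
  have "(T ^^ n) (T u) = T ((T ^^ n) u)" by (simp add: funpow_swap1)
  thus ?thesis using u linear_on_zero[OF vec_subspace_carrier linear_T] unfolding U_eq by auto
qed

lemma Tk_U: "u \<in> U \<Longrightarrow> (T ^^ k) u \<in> U"
  by (induction k) (auto simp: T_U)

lemma l_conj_sym: "u \<in> carrier_vec n \<Longrightarrow> w \<in> carrier_vec n \<Longrightarrow> l u w = cnj (l w u)"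
  using hermitian_conj_sym[OF herm] .

lemma A_self_adjoint: "v \<in> carrier_vec n \<Longrightarrow> w \<in> carrier_vec n \<Longrightarrow> l (A v) w = l (A w) v"
  using sa unfolding self_adjoint_wrt_def by blast

lemma T_self_adjoint: "u \<in> carrier_vec n \<Longrightarrow> v \<in> carrier_vec n \<Longrightarrow> l (T u) v = l u (T v)"
proof -
  assume u: "u \<in> carrier_vec n" and v: "v \<in> carrier_vec n"
  have 1: "l (A (A u)) v = l (A v) (A u)" using A_self_adjoint[of "A u" v] u v by simp
  have 2: "l u (A (A v)) = cnj (l (A (A v)) u)" using l_conj_sym[of u "A (A v)"] u v by simp
  have 3: "l (A (A v)) u = l (A u) (A v)" using A_self_adjoint[of "A v" u] u v by simp
  have 4: "l u (A (A v)) = l (A v) (A u)" using 2 3 l_conj_sym[of "A v" "A u"] u v by simp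
  have "T u = A (A u) + (-mu) \<cdot>\<^sub>v u" unfolding T_def using u by (intro eq_vecI) auto
  hence "l (T u) v = l (A (A u)) v + (-mu) * l u v"
    using u v by (simp add: hermitian_add_left[OF herm] hermitian_smult_left[OF herm])
  moreover have "T v = A (A v) + (-mu) \<cdot>\<^sub>v v" unfolding T_def using v by (intro eq_vecI) auto
  hence "l u (T v) = l u (A (A v)) + (-mu) * l u v"
    using u v by (simp add: hermitian_add_right[OF herm] hermitian_smult_right[OF herm])
  ultimately show ?thesis using 1 4 by simp
qed

lemma Tk_self_adjoint: "u \<in> carrier_vec n \<Longrightarrow> v \<in> carrier_vec n \<Longrightarrow> l ((T ^^ k) u) v = l u ((T ^^ k) v)"
proof (induction k arbitrary: v)
  case (Suc k)
  have "l ((T ^^ Suc k) u) v = l ((T ^^ k) u) (T v)" using Suc by (simp add: T_self_adjoint)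
  also have "\<dots> = l u ((T ^^ k) (T v))" using Suc by simp
  also have "\<dots> = l u ((T ^^ Suc k) v)" by (simp add: funpow_swap1)
  finally show ?case .
qed simp

lemma carrier_U_plus_range_T:
  assumes x: "x \<in> carrier_vec n"
  shows "\<exists>u\<in>U. \<exists>y\<in>carrier_vec n. x = u + T y"
proof -
  obtain j z where j: "j \<le> n" and z: "z \<in> carrier_vec n" and Tjx: "(T ^^ j) x = (T ^^ Suc j) z"
    using funpow_in_range_funpow_Suc[OF linear_T x] by blast
  define u where "u = x + (-1) \<cdot>\<^sub>v T z"
  have uc: "u \<in> carrier_vec n" unfolding u_def using x z by simp
  have "(T ^^ j) u = (T ^^ j) x + (-1) \<cdot>\<^sub>v (T ^^ Suc j) z"
    unfolding u_def using x z linear_onD[OF linear_Tk] by (simp add: funpow_swap1)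
  also have "\<dots> = 0\<^sub>v n" unfolding Tjx using z by (intro eq_vecI) auto
  finally have "(T ^^ n) u = 0\<^sub>v n"
    using j by (metis Tk_zero funpow_add le_add_diff_inverse2 o_apply)
  hence "u \<in> U" unfolding U_eq using uc by simp
  moreover have "x = u + T z" unfolding u_def using x z by (intro eq_vecI) auto
  ultimately show ?thesis using z by auto
qed

lemma carrier_U_plus_range_Tk:
  assumes x: "x \<in> carrier_vec n"
  shows "\<exists>u\<in>U. \<exists>y\<in>carrier_vec n. x = u + (T ^^ m) y"
proof (induction m)
  case 0 show ?case using x vec_subspaceD(2)[OF vec_subspace_U] by (intro bexI[of _ "0\<^sub>v n"] bexI[of _ x]) auto
next
  case (Suc m)
  then obtain u y where u: "u \<in> U" and y: "y \<in> carrier_vec n" and xe: "x = u + (T ^^ m) y" by auto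
  obtain u' y' where u': "u' \<in> U" and y': "y' \<in> carrier_vec n" and ye: "y = u' + T y'"
    using carrier_U_plus_range_T[OF y] by auto
  have "(T ^^ m) y = (T ^^ m) u' + (T ^^ Suc m) y'"
    unfolding ye using linear_onD(2)[OF linear_Tk] u' y' U_carrier
    by (simp add: funpow_swap1)
  hence "x = (u + (T ^^ m) u') + (T ^^ Suc m) y'"
    using xe u u' y' U_carrier by (simp add: funpow_swap1, intro assoc_add_vec[symmetric], auto)
  moreover have "u + (T ^^ m) u' \<in> U" using u u' Tk_U vec_subspaceD(3)[OF vec_subspace_U] by auto
  ultimately show ?case using y' by auto
qed

lemma nondegenerate_U:
  assumes u: "u \<in> U" and orth: "\<And>w. w \<in> U \<Longrightarrow> l u w = 0"
  shows "u = 0\<^sub>v n"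
proof -
  have uc: "u \<in> carrier_vec n" using u U_carrier by auto
  have "\<forall>w\<in>carrier_vec n. l u w = 0"
  proof
    fix w :: "complex vec" assume w: "w \<in> carrier_vec n"
    obtain u' y where u': "u' \<in> U" and y: "y \<in> carrier_vec n" and we: "w = u' + (T ^^ n) y"
      using carrier_U_plus_range_Tk[OF w, of n] by auto
    have "l u w = l u u' + l u ((T ^^ n) y)"
      unfolding we using uc u' y U_carrier by (simp add: hermitian_add_right[OF herm])
    also have "l u ((T ^^ n) y) = l ((T ^^ n) u) y" using Tk_self_adjoint uc y by simp
    also have "\<dots> = 0" using u y unfolding U_eq by (simp add: hermitian_zero_left[OF herm])
    finally show "l u w = 0" using orth[OF u'] by simp
  qed
  thus ?thesis using nondeg uc unfolding nondegenerate_def by auto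
qed

end

section \<open>Polynomials in \<open>T\<close>\<close>

definition coeff_conv :: "(nat \<Rightarrow> real) \<Rightarrow> (nat \<Rightarrow> real) \<Rightarrow> nat \<Rightarrow> real" where
  "coeff_conv c d k = (\<Sum>i\<le>k. c i * d (k - i))"

lemma coeff_conv_commute: "coeff_conv c d = coeff_conv d c"
proof
  fix k
  have "coeff_conv c d k = (\<Sum>i<Suc k. c i * d (k - i))" unfolding coeff_conv_def lessThan_Suc_atMost ..
  also have "\<dots> = (\<Sum>i<Suc k. c (Suc k - Suc i) * d (k - (Suc k - Suc i)))"
    by (rule sum.nat_diff_reindex[symmetric])
  also have "\<dots> = (\<Sum>i<Suc k. d i * c (k - i))"
    by (intro sum.cong) auto
  finally show "coeff_conv c d k = coeff_conv d c k" unfolding coeff_conv_def lessThan_Suc_atMost .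
qed

definition unit_coeff :: "nat \<Rightarrow> real" where "unit_coeff k = (if k = 0 then 1 else 0)"

definition X_coeff :: "nat \<Rightarrow> real" where "X_coeff k = (if k = 1 then 1 else 0)"

lemma coeff_conv_unit_right: "coeff_conv c unit_coeff = c"
proof
  fix k
  have "coeff_conv c unit_coeff k = (\<Sum>i\<le>k. if i = k then c k else 0)"
    unfolding coeff_conv_def unit_coeff_def by (intro sum.cong) auto
  thus "coeff_conv c unit_coeff k = c k" by simp
qed

lemma coeff_conv_unit_left: "coeff_conv unit_coeff c = c"
  using coeff_conv_unit_right coeff_conv_commute by metis

lemma coeff_conv_X_left: "coeff_conv X_coeff c k = (if k = 0 then 0 else c (k - 1))"
proof -
  have "coeff_conv X_coeff c k = (\<Sum>i\<le>k. if i = 1 then c (k - 1) else 0)"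
    unfolding coeff_conv_def X_coeff_def by (intro sum.cong) auto
  thus ?thesis by simp
qed

lemma sum_sum_coeff_conv:
  fixes x :: "nat \<Rightarrow> complex"
  assumes x: "\<And>m. m \<ge> N \<Longrightarrow> x m = 0"
  shows "(\<Sum>k<N. complex_of_real (c k) * (\<Sum>j<N. complex_of_real (d j) * x (k + j)))
       = (\<Sum>m<N. complex_of_real (coeff_conv c d m) * x m)"
proof -
  define g where "g = (\<lambda>i j. complex_of_real (c i) * complex_of_real (d j) * x (i + j))"
  have "(\<Sum>k<N. complex_of_real (c k) * (\<Sum>j<N. complex_of_real (d j) * x (k + j)))
      = (\<Sum>k<N. \<Sum>j<N. g k j)" unfolding g_def by (simp add: sum_distrib_left mult.assoc)
  also have "\<dots> = (\<Sum>(i,j)\<in>{..<N} \<times> {..<N}. g i j)" by (simp add: sum.cartesian_product)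
  also have "\<dots> = (\<Sum>(i,j)\<in>{(i,j). i+j < N}. g i j)"
    by (rule sum.mono_neutral_right) (auto simp: g_def, (metis leI x)+)
  also have "\<dots> = (\<Sum>k<N. \<Sum>i\<le>k. g i (k - i))" by (rule sum.triangle_reindex)
  also have "\<dots> = (\<Sum>m<N. complex_of_real (coeff_conv c d m) * x m)"
    unfolding coeff_conv_def g_def by (intro sum.cong refl) (simp add: sum_distrib_right)
  finally show ?thesis .
qed

lemma funpow_apply_add: "(f ^^ a) ((f ^^ b) x) = (f ^^ (a + b)) x"
  by (simp add: funpow_add)

lemma funpow_apply_comm: "(f ^^ a) ((f ^^ b) x) = (f ^^ b) ((f ^^ a) x)"
  by (simp add: funpow_apply_add add.commute)

context antilinear_selfadjoint begin

text \<open>Polynomials in T with real coefficient sequences, truncated at degree n; on U, where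
  T^n = 0, the truncation is invisible and composition corresponds to coeff_conv.\<close>
definition poly_T :: "(nat \<Rightarrow> real) \<Rightarrow> complex vec \<Rightarrow> complex vec" where
  "poly_T c v = vsum n {..<n} (\<lambda>k. complex_of_real (c k) \<cdot>\<^sub>v (T ^^ k) v)"

lemma poly_T_carrier[simp]: "poly_T c v \<in> carrier_vec n"
  unfolding poly_T_def by simp

lemma poly_T_dim[simp]: "dim_vec (poly_T c v) = n"
  unfolding poly_T_def vsum_def by simp

lemma poly_T_index: "v \<in> carrier_vec n \<Longrightarrow> t < n \<Longrightarrow>
  poly_T c v $ t = (\<Sum>k<n. complex_of_real (c k) * (T ^^ k) v $ t)"
  unfolding poly_T_def vsum_def by simp

lemma poly_T_U: "u \<in> U \<Longrightarrow> poly_T c u \<in> U"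
  unfolding poly_T_def
  by (intro vsum_in_subspace[OF vec_subspace_U]) (auto intro!: vec_subspaceD(4)[OF vec_subspace_U] Tk_U)

lemma poly_T_add: "u \<in> carrier_vec n \<Longrightarrow> v \<in> carrier_vec n \<Longrightarrow> poly_T c (u + v) = poly_T c u + poly_T c v"
proof (rule eq_vecI)
  fix t assume u: "u \<in> carrier_vec n" and v: "v \<in> carrier_vec n" and "t < dim_vec (poly_T c u + poly_T c v)"
  hence t: "t < n" by simp
  have e: "\<And>k. (T ^^ k) (u + v) = (T ^^ k) u + (T ^^ k) v" using linear_onD(2)[OF linear_Tk] u v by simp
  show "poly_T c (u + v) $ t = (poly_T c u + poly_T c v) $ t"
    using u v t by (simp add: poly_T_index e distrib_left sum.distrib)
qed simp

lemma poly_T_smult: "u \<in> carrier_vec n \<Longrightarrow> poly_T c (z \<cdot>\<^sub>v u) = z \<cdot>\<^sub>v poly_T c u"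
proof (rule eq_vecI)
  fix t assume u: "u \<in> carrier_vec n" and "t < dim_vec (z \<cdot>\<^sub>v poly_T c u)"
  hence t: "t < n" by simp
  have e: "\<And>k. (T ^^ k) (z \<cdot>\<^sub>v u) = z \<cdot>\<^sub>v (T ^^ k) u" using linear_onD(3)[OF linear_Tk] u by simp
  show "poly_T c (z \<cdot>\<^sub>v u) $ t = (z \<cdot>\<^sub>v poly_T c u) $ t"
    using u t by (simp add: poly_T_index e sum_distrib_left mult.left_commute)
qed simp

lemma linear_poly_T: "linear_on n U (poly_T c)"
  unfolding linear_on_def using poly_T_U poly_T_add poly_T_smult U_carrier by auto

lemma Tk_poly_T_commute: "v \<in> carrier_vec n \<Longrightarrow> (T ^^ k) (poly_T c v) = poly_T c ((T ^^ k) v)"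
proof -
  assume v: "v \<in> carrier_vec n"
  have "(T ^^ k) (poly_T c v) = vsum n {..<n} (\<lambda>j. (T ^^ k) (complex_of_real (c j) \<cdot>\<^sub>v (T ^^ j) v))"
    unfolding poly_T_def
    by (rule additive_vsum[OF vec_subspace_carrier]) (use v linear_onD[OF linear_Tk] in auto)
  also have "\<dots> = vsum n {..<n} (\<lambda>j. complex_of_real (c j) \<cdot>\<^sub>v (T ^^ j) ((T ^^ k) v))"
    using v linear_onD(3)[OF linear_Tk]
    by (intro vsum_cong) (simp add: funpow_apply_comm)
  finally show ?thesis unfolding poly_T_def .
qed

lemma poly_T_poly_T:
  assumes u: "u \<in> U"
  shows "poly_T c (poly_T d u) = poly_T (coeff_conv c d) u"
proof (rule eq_vecI)
  have uc: "u \<in> carrier_vec n" using u U_carrier by simp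
  fix t assume "t < dim_vec (poly_T (coeff_conv c d) u)" hence t: "t < n" by simp
  have x: "\<And>m. m \<ge> n \<Longrightarrow> (T ^^ m) u $ t = 0"
  proof -
    fix m assume "m \<ge> n"
    hence "(T ^^ m) u = (T ^^ (m - n)) ((T ^^ n) u)" by (simp add: funpow_apply_add)
    also have "\<dots> = 0\<^sub>v n" using u unfolding U_eq by simp
    finally show "(T ^^ m) u $ t = 0" using t by simp
  qed
  have inner: "\<And>k. (T ^^ k) (poly_T d u) $ t = (\<Sum>j<n. complex_of_real (d j) * (T ^^ (k + j)) u $ t)"
    using uc t by (simp add: Tk_poly_T_commute poly_T_index funpow_apply_add add.commute)
  have "poly_T c (poly_T d u) $ t = (\<Sum>k<n. complex_of_real (c k) * (\<Sum>j<n. complex_of_real (d j) * (T ^^ (k + j)) u $ t))"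
    using t by (simp add: poly_T_index inner)
  also have "\<dots> = (\<Sum>m<n. complex_of_real (coeff_conv c d m) * (T ^^ m) u $ t)"
    by (rule sum_sum_coeff_conv) (rule x)
  also have "\<dots> = poly_T (coeff_conv c d) u $ t" using uc t by (simp add: poly_T_index)
  finally show "poly_T c (poly_T d u) $ t = poly_T (coeff_conv c d) u $ t" .
qed simp

lemma poly_T_commute: "u \<in> U \<Longrightarrow> poly_T c (poly_T d u) = poly_T d (poly_T c u)"
  by (simp add: poly_T_poly_T coeff_conv_commute)

lemma poly_T_unit: "v \<in> carrier_vec n \<Longrightarrow> poly_T unit_coeff v = v"
proof (rule eq_vecI)
  fix t assume v: "v \<in> carrier_vec n" and "t < dim_vec v" hence t: "t < n" by simp
  have "poly_T unit_coeff v $ t = (\<Sum>k<n. if k = 0 then v $ t else 0)"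
    unfolding poly_T_index[OF v t] unit_coeff_def by (intro sum.cong) auto
  thus "poly_T unit_coeff v $ t = v $ t" using t by simp
qed simp

lemma poly_T_X:
  assumes u: "u \<in> U"
  shows "poly_T X_coeff u = T u"
proof (rule eq_vecI)
  have uc: "u \<in> carrier_vec n" using u U_carrier by simp
  fix t assume "t < dim_vec (T u)" hence t: "t < n" using uc by simp
  have "poly_T X_coeff u $ t = (\<Sum>k<n. if k = 1 then T u $ t else 0)"
    unfolding poly_T_index[OF uc t] X_coeff_def by (intro sum.cong) auto
  also have "\<dots> = T u $ t"
  proof (cases "1 < n")
    case False
    hence "n = 1" using t by simp
    hence "T u = 0\<^sub>v n" using u unfolding U_eq by simp
    thus ?thesis using False t by simp
  qed simp
  finally show "poly_T X_coeff u $ t = T u $ t" .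
qed (use U_carrier[OF u] in simp)

lemma poly_T_lincomb_coeffs:
  "v \<in> carrier_vec n \<Longrightarrow> poly_T (\<lambda>k. a * c k + b * d k) v
     = complex_of_real a \<cdot>\<^sub>v poly_T c v + complex_of_real b \<cdot>\<^sub>v poly_T d v"
proof (rule eq_vecI)
  fix t assume v: "v \<in> carrier_vec n" and "t < dim_vec (complex_of_real a \<cdot>\<^sub>v poly_T c v + complex_of_real b \<cdot>\<^sub>v poly_T d v)"
  hence t: "t < n" by simp
  show "poly_T (\<lambda>k. a * c k + b * d k) v $ t = (complex_of_real a \<cdot>\<^sub>v poly_T c v + complex_of_real b \<cdot>\<^sub>v poly_T d v) $ t"
    using v t by (simp add: poly_T_index sum.distrib sum_distrib_left algebra_simps)
qed simp

lemma A_poly_T_commute: "v \<in> carrier_vec n \<Longrightarrow> A (poly_T c v) = poly_T c (A v)"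
proof -
  assume v: "v \<in> carrier_vec n"
  have "A (poly_T c v) = vsum n {..<n} (\<lambda>j. A (complex_of_real (c j) \<cdot>\<^sub>v (T ^^ j) v))"
    unfolding poly_T_def
    by (rule additive_vsum[OF vec_subspace_carrier]) (use v A_add in auto)
  also have "\<dots> = vsum n {..<n} (\<lambda>j. complex_of_real (c j) \<cdot>\<^sub>v (T ^^ j) (A v))"
    using v by (intro vsum_cong) (simp add: A_smult Tk_A_commute)
  finally show ?thesis unfolding poly_T_def .
qed

lemma poly_T_self_adjoint: "u \<in> carrier_vec n \<Longrightarrow> v \<in> carrier_vec n \<Longrightarrow> l (poly_T c u) v = l u (poly_T c v)"
proof -
  assume u: "u \<in> carrier_vec n" and v: "v \<in> carrier_vec n"
  have "l (poly_T c u) v = (\<Sum>k<n. l (complex_of_real (c k) \<cdot>\<^sub>v (T ^^ k) u) v)"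
    unfolding poly_T_def
    by (rule additive_vsum_scalar[OF vec_subspace_carrier]) (use u v in \<open>auto simp: hermitian_add_left[OF herm] hermitian_zero_left[OF herm]\<close>)
  also have "\<dots> = (\<Sum>k<n. l u (complex_of_real (c k) \<cdot>\<^sub>v (T ^^ k) v))"
    using u v by (intro sum.cong) (auto simp: hermitian_smult_left[OF herm] hermitian_smult_right[OF herm] Tk_self_adjoint)
  also have "\<dots> = l u (poly_T c v)"
    unfolding poly_T_def
    by (rule additive_vsum_scalar[OF vec_subspace_carrier, symmetric, where F="\<lambda>x. l u x"])
      (use u v in \<open>auto simp: hermitian_add_right[OF herm] hermitian_zero_right[OF herm]\<close>)
  finally show ?thesis .
qed

end

section \<open>A square root of \<open>A\<^sup>2\<close> and the conjugation \<open>K\<close>\<close>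

lemma gbinomial_1_left: "((1::real) gchoose k) = (if k = 0 then 1 else if k = 1 then 1 else 0)"
proof -
  have "((1::real) gchoose k) = real (1 choose k)" by (simp add: binomial_gbinomial)
  thus ?thesis by (cases k) (auto simp: binomial_eq_0)
qed

context antilinear_selfadjoint begin

definition L :: real where "L = \<bar>lam\<bar>"
definition m :: real where "m = lam\<^sup>2"

lemma L_pos: "L > 0" unfolding L_def using pos by auto
lemma m_pos: "m > 0" unfolding m_def using pos by auto
lemma L_mult_self: "L * L = m" unfolding L_def m_def by (simp add: power2_eq_square abs_mult_self_eq)
lemma mu_m: "mu = complex_of_real m" unfolding mu_def m_def by simp

text \<open>Taylor coefficients of (1 + x/m)^(1/2) and (1 + x/m)^(-1/2).\<close>
definition sqrt_coeff :: "nat \<Rightarrow> real" where "sqrt_coeff k = ((1/2::real) gchoose k) / m ^ k"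
definition inv_sqrt_coeff :: "nat \<Rightarrow> real" where "inv_sqrt_coeff k = ((-1/2::real) gchoose k) / m ^ k"
definition N_coeff :: "nat \<Rightarrow> real" where "N_coeff k = L * (sqrt_coeff k - unit_coeff k)"
text \<open>Cofactors exhibiting N and T as multiples of each other.\<close>
definition N_div_T_coeff :: "nat \<Rightarrow> real" where "N_div_T_coeff k = N_coeff (Suc k)"
definition T_div_N_coeff :: "nat \<Rightarrow> real" where "T_div_N_coeff k = L * (sqrt_coeff k + unit_coeff k)"

lemma coeff_conv_gbinomial: "coeff_conv (\<lambda>k. (a gchoose k) / m ^ k) (\<lambda>k. (b gchoose k) / m ^ k) k = ((a + b) gchoose k) / m ^ k"
proof -
  have "coeff_conv (\<lambda>k. (a gchoose k) / m ^ k) (\<lambda>k. (b gchoose k) / m ^ k) k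
     = (\<Sum>i\<le>k. (a gchoose i) * (b gchoose (k - i)) / m ^ k)"
    unfolding coeff_conv_def
  proof (intro sum.cong refl)
    fix i assume "i \<in> {..k}" hence "m ^ i * m ^ (k - i) = m ^ k" by (simp add: power_add[symmetric])
    thus "(a gchoose i) / m ^ i * ((b gchoose (k - i)) / m ^ (k - i)) = (a gchoose i) * (b gchoose (k - i)) / m ^ k"
      by (metis divide_divide_eq_left times_divide_times_eq)
  qed
  also have "\<dots> = (\<Sum>i\<le>k. (a gchoose i) * (b gchoose (k - i))) / m ^ k"
    by (simp add: sum_divide_distrib)
  also have "\<dots> = ((a + b) gchoose k) / m ^ k"
    using gbinomial_Vandermonde[of a b k] by (simp add: atMost_atLeast0)
  finally show ?thesis .
qed

lemma coeff_conv_sqrt_sqrt: "coeff_conv sqrt_coeff sqrt_coeff = (\<lambda>k. 1 * unit_coeff k + 1 / m * X_coeff k)"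
proof
  fix k
  have "coeff_conv sqrt_coeff sqrt_coeff k = ((1/2 + 1/2::real) gchoose k) / m ^ k"
    unfolding sqrt_coeff_def[abs_def] by (rule coeff_conv_gbinomial)
  thus "coeff_conv sqrt_coeff sqrt_coeff k = 1 * unit_coeff k + 1 / m * X_coeff k"
    by (simp add: gbinomial_1_left unit_coeff_def X_coeff_def)
qed

lemma coeff_conv_sqrt_inv_sqrt: "coeff_conv sqrt_coeff inv_sqrt_coeff = unit_coeff"
proof
  fix k
  have "coeff_conv sqrt_coeff inv_sqrt_coeff k = ((1/2 + -1/2::real) gchoose k) / m ^ k"
    unfolding sqrt_coeff_def[abs_def] inv_sqrt_coeff_def[abs_def] by (rule coeff_conv_gbinomial)
  thus "coeff_conv sqrt_coeff inv_sqrt_coeff k = unit_coeff k" by (simp add: gbinomial_0_left unit_coeff_def)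
qed

lemma N_coeff_0: "N_coeff 0 = 0" unfolding N_coeff_def sqrt_coeff_def unit_coeff_def by simp

definition R where "R = poly_T sqrt_coeff"
definition R_inv where "R_inv = poly_T inv_sqrt_coeff"
definition N where "N = poly_T N_coeff"
definition N_div_T where "N_div_T = poly_T N_div_T_coeff"
definition T_div_N where "T_div_N = poly_T T_div_N_coeff"

lemma R_inv_U: "u \<in> U \<Longrightarrow> R_inv u \<in> U" unfolding R_inv_def by (rule poly_T_U)
lemma R_R_inv: "u \<in> U \<Longrightarrow> R (R_inv u) = u"
  unfolding R_def R_inv_def using U_carrier
  by (simp add: poly_T_poly_T coeff_conv_sqrt_inv_sqrt poly_T_unit)

lemma R_inv_R: "u \<in> U \<Longrightarrow> R_inv (R u) = u"
  unfolding R_def R_inv_def using U_carrier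
  by (simp add: poly_T_poly_T coeff_conv_commute[of inv_sqrt_coeff] coeff_conv_sqrt_inv_sqrt poly_T_unit)

lemma R_R:
  assumes u: "u \<in> U"
  shows "R (R u) = u + complex_of_real (1/m) \<cdot>\<^sub>v T u"
proof -
  have "R (R u) = poly_T (\<lambda>k. 1 * unit_coeff k + 1 / m * X_coeff k) u"
    unfolding R_def poly_T_poly_T[OF u] coeff_conv_sqrt_sqrt ..
  also have "\<dots> = complex_of_real 1 \<cdot>\<^sub>v poly_T unit_coeff u + complex_of_real (1/m) \<cdot>\<^sub>v poly_T X_coeff u"
    using U_carrier[OF u] by (rule poly_T_lincomb_coeffs)
  finally show ?thesis using U_carrier[OF u] by (simp add: poly_T_unit poly_T_X[OF u])
qed

lemma AA_eq_R_R: "u \<in> U \<Longrightarrow> A (A u) = mu \<cdot>\<^sub>v R (R u)"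
proof -
  assume u: "u \<in> U"
  have uc: "u \<in> carrier_vec n" using U_carrier u by simp
  show ?thesis unfolding R_R[OF u]
  proof (rule eq_vecI)
    fix t assume "t < dim_vec (mu \<cdot>\<^sub>v (u + complex_of_real (1 / m) \<cdot>\<^sub>v T u))"
    hence t: "t < n" using uc by simp
    have "T u $ t = A (A u) $ t - mu * u $ t" unfolding T_def using uc t by simp
    thus "A (A u) $ t = (mu \<cdot>\<^sub>v (u + complex_of_real (1 / m) \<cdot>\<^sub>v T u)) $ t"
      using uc t m_pos by (simp add: mu_m field_simps)
  qed (use uc in simp)
qed

lemma R_eq_N: "v \<in> carrier_vec n \<Longrightarrow> R v = v + complex_of_real (1/L) \<cdot>\<^sub>v N v"
proof -
  assume v: "v \<in> carrier_vec n"
  have "sqrt_coeff = (\<lambda>k. 1 * unit_coeff k + (1/L) * N_coeff k)"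
    using L_pos by (auto simp: N_coeff_def unit_coeff_def)
  hence "R v = complex_of_real 1 \<cdot>\<^sub>v poly_T unit_coeff v + complex_of_real (1/L) \<cdot>\<^sub>v poly_T N_coeff v"
    unfolding R_def using poly_T_lincomb_coeffs[OF v, of 1 unit_coeff "1/L" N_coeff] by simp
  thus ?thesis unfolding N_def using poly_T_unit[OF v] by (simp add: unit_coeff_def[abs_def])
qed

lemma N_eq_T_N_div_T: "u \<in> U \<Longrightarrow> N u = T (N_div_T u)"
proof -
  assume u: "u \<in> U"
  have "coeff_conv X_coeff N_div_T_coeff = N_coeff"
    using N_coeff_0 by (auto simp: coeff_conv_X_left N_div_T_coeff_def gr0_conv_Suc)
  thus ?thesis
    unfolding N_div_T_def N_def poly_T_X[OF poly_T_U[OF u], symmetric] poly_T_poly_T[OF u] by simp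
qed

text \<open>N = L (R - 1) and T_div_N = L (R + 1), so their product is m (R^2 - 1) = T.\<close>
lemma T_eq_N_T_div_N: "u \<in> U \<Longrightarrow> T u = N (T_div_N u)"
proof -
  assume u: "u \<in> U"
  have unit: "(\<Sum>i\<le>k. c i * unit_coeff (k - i)) = c k" "(\<Sum>i\<le>k. unit_coeff i * c (k - i)) = c k"
    for c :: "nat \<Rightarrow> real" and k
    using fun_cong[OF coeff_conv_unit_right, of c k] fun_cong[OF coeff_conv_unit_left, of c k]
    unfolding coeff_conv_def by simp_all
  have "coeff_conv N_coeff T_div_N_coeff k = L * L * (coeff_conv sqrt_coeff sqrt_coeff k - unit_coeff k)" for k
    unfolding coeff_conv_def N_coeff_def T_div_N_coeff_def
    by (simp add: algebra_simps sum.distrib sum_subtractf unit flip: sum_distrib_left)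
  also have "L * L * (coeff_conv sqrt_coeff sqrt_coeff k - unit_coeff k) = X_coeff k" for k
    using m_pos by (simp add: L_mult_self coeff_conv_sqrt_sqrt)
  finally have "coeff_conv N_coeff T_div_N_coeff = X_coeff" ..
  thus ?thesis unfolding N_def T_div_N_def poly_T_poly_T[OF u] using poly_T_X[OF u] by simp
qed

lemma poly_T_funpow_commute: "x \<in> U \<Longrightarrow> poly_T c ((poly_T d ^^ k) x) = (poly_T d ^^ k) (poly_T c x)"
proof (induction k)
  case (Suc k)
  have y: "(poly_T d ^^ k) x \<in> U"
    using Suc.prems by (induction k) (auto intro: poly_T_U)
  have "poly_T c ((poly_T d ^^ Suc k) x) = poly_T c (poly_T d ((poly_T d ^^ k) x))" by simp
  also have "\<dots> = poly_T d (poly_T c ((poly_T d ^^ k) x))" using poly_T_commute[OF y] by simp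
  also have "\<dots> = poly_T d ((poly_T d ^^ k) (poly_T c x))" using Suc by simp
  finally show ?case by simp
qed simp

lemma poly_T_funpow_U: "x \<in> U \<Longrightarrow> (poly_T d ^^ k) x \<in> U"
  by (induction k) (auto intro: poly_T_U)

lemma Nk_eq_Tk: "u \<in> U \<Longrightarrow> (N ^^ k) u = (T ^^ k) ((N_div_T ^^ k) u)"
proof (induction k)
  case (Suc k)
  have wk: "(N_div_T ^^ k) u \<in> U" unfolding N_div_T_def using poly_T_funpow_U Suc.prems by simp
  have "(N ^^ Suc k) u = N ((T ^^ k) ((N_div_T ^^ k) u))" using Suc by simp
  also have "\<dots> = T (N_div_T ((T ^^ k) ((N_div_T ^^ k) u)))" using N_eq_T_N_div_T Tk_U wk by simp
  also have "N_div_T ((T ^^ k) ((N_div_T ^^ k) u)) = (T ^^ k) (N_div_T ((N_div_T ^^ k) u))"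
    unfolding N_div_T_def using Tk_poly_T_commute U_carrier[OF wk[unfolded N_div_T_def]] by simp
  finally show ?case by (simp add: funpow_swap1)
qed simp

lemma Tk_eq_Nk: "u \<in> U \<Longrightarrow> (T ^^ k) u = (N ^^ k) ((T_div_N ^^ k) u)"
proof (induction k)
  case (Suc k)
  have vk: "(T_div_N ^^ k) u \<in> U" unfolding T_div_N_def using poly_T_funpow_U Suc.prems by simp
  have nk: "(N ^^ k) ((T_div_N ^^ k) u) \<in> U" unfolding N_def using poly_T_funpow_U vk by simp
  have "(T ^^ Suc k) u = T ((N ^^ k) ((T_div_N ^^ k) u))" using Suc by simp
  also have "\<dots> = N (T_div_N ((N ^^ k) ((T_div_N ^^ k) u)))" using T_eq_N_T_div_N nk by simp
  also have "T_div_N ((N ^^ k) ((T_div_N ^^ k) u)) = (N ^^ k) (T_div_N ((T_div_N ^^ k) u))"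
    unfolding T_div_N_def N_def using poly_T_funpow_commute vk[unfolded T_div_N_def] by simp
  finally show ?case by (simp add: funpow_swap1)
qed simp

lemma N_nilpotent: "u \<in> U \<Longrightarrow> (N ^^ n) u = 0\<^sub>v n"
proof -
  assume u: "u \<in> U"
  have "(N_div_T ^^ n) u \<in> U" unfolding N_div_T_def using poly_T_funpow_U u by simp
  thus ?thesis using Nk_eq_Tk[OF u, of n] unfolding U_eq by simp
qed

definition K where "K u = complex_of_real (1/L) \<cdot>\<^sub>v A (R_inv u)"

lemma K_U: "u \<in> U \<Longrightarrow> K u \<in> U"
  unfolding K_def using A_U R_inv_U vec_subspaceD(4)[OF vec_subspace_U] by simp

lemma R_inv_carrier: "R_inv u \<in> carrier_vec n" unfolding R_inv_def by simp

lemma antilinear_K: "antilinear_on n U K"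
  unfolding antilinear_on_def
proof (intro conjI ballI allI)
  fix u v assume u: "u \<in> U" and v: "v \<in> U"
  have "R_inv (u + v) = R_inv u + R_inv v" unfolding R_inv_def using linear_onD(2)[OF linear_poly_T u v] .
  hence e: "A (R_inv (u + v)) = A (R_inv u) + A (R_inv v)" using R_inv_carrier A_add by simp
  show "K (u + v) = K u + K v" unfolding K_def e
    by (rule smult_add_distrib_vec[of _ n]) (auto simp: R_inv_carrier)
next
  fix z u assume u: "u \<in> U"
  have "R_inv (z \<cdot>\<^sub>v u) = z \<cdot>\<^sub>v R_inv u" unfolding R_inv_def using linear_onD(3)[OF linear_poly_T u] .
  thus "K (z \<cdot>\<^sub>v u) = cnj z \<cdot>\<^sub>v K u" unfolding K_def using R_inv_carrier
    by (simp add: A_smult smult_smult_assoc mult.commute)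
qed (rule K_U)

lemma K_involution: "u \<in> U \<Longrightarrow> K (K u) = u"
proof -
  assume u: "u \<in> U"
  have uc: "u \<in> carrier_vec n" using u U_carrier by simp
  have riu: "R_inv u \<in> U" using R_inv_U u by simp
  have ririu: "R_inv (R_inv u) \<in> U" using R_inv_U riu by simp
  have "K (K u) = complex_of_real (1/L) \<cdot>\<^sub>v A (R_inv (complex_of_real (1/L) \<cdot>\<^sub>v A (R_inv u)))"
    unfolding K_def ..
  also have "R_inv (complex_of_real (1/L) \<cdot>\<^sub>v A (R_inv u)) = complex_of_real (1/L) \<cdot>\<^sub>v R_inv (A (R_inv u))"
    unfolding R_inv_def by (rule poly_T_smult) (simp add: R_inv_carrier)
  also have "R_inv (A (R_inv u)) = A (R_inv (R_inv u))" unfolding R_inv_def using A_poly_T_commute R_inv_carrier[unfolded R_inv_def] by simp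
  also have "A (complex_of_real (1/L) \<cdot>\<^sub>v A (R_inv (R_inv u))) = complex_of_real (1/L) \<cdot>\<^sub>v A (A (R_inv (R_inv u)))"
    using R_inv_carrier by (simp add: A_smult)
  also have "A (A (R_inv (R_inv u))) = mu \<cdot>\<^sub>v R (R (R_inv (R_inv u)))" using AA_eq_R_R ririu by simp
  also have "R (R (R_inv (R_inv u))) = u" using R_R_inv riu u by simp
  finally have "K (K u) = complex_of_real (1/L) \<cdot>\<^sub>v (complex_of_real (1/L) \<cdot>\<^sub>v (mu \<cdot>\<^sub>v u))" .
  also have "\<dots> = u"
  proof -
    have e: "mu / (complex_of_real L * complex_of_real L) = 1"
      using L_pos L_mult_self m_pos unfolding mu_m by (simp flip: of_real_mult)
    show ?thesis using uc by (simp add: smult_smult_assoc e)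
  qed
  finally show ?thesis .
qed

lemma A_eq_K_R: "u \<in> U \<Longrightarrow> A u = complex_of_real L \<cdot>\<^sub>v K (R u)"
proof -
  assume u: "u \<in> U"
  have uc: "u \<in> carrier_vec n" using u U_carrier by simp
  have "K (R u) = complex_of_real (1/L) \<cdot>\<^sub>v A u" unfolding K_def using R_inv_R u by simp
  thus ?thesis using uc L_pos by (simp add: smult_smult_assoc)
qed

lemma K_self_adjoint: "u \<in> U \<Longrightarrow> v \<in> U \<Longrightarrow> l (K u) v = l (K v) u"
proof -
  assume u: "u \<in> U" and v: "v \<in> U"
  have uc: "u \<in> carrier_vec n" and vc: "v \<in> carrier_vec n" using u v U_carrier by auto
  have "l (K u) v = complex_of_real (1/L) * l (A (R_inv u)) v"
    unfolding K_def using vc R_inv_carrier by (simp add: hermitian_smult_left[OF herm])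
  also have "l (A (R_inv u)) v = l (A v) (R_inv u)" using A_self_adjoint vc R_inv_carrier by simp
  also have "\<dots> = cnj (l (R_inv u) (A v))" using l_conj_sym[of "A v" "R_inv u"] vc R_inv_carrier by simp
  also have "l (R_inv u) (A v) = l u (R_inv (A v))" unfolding R_inv_def using poly_T_self_adjoint uc vc by simp
  also have "R_inv (A v) = A (R_inv v)" unfolding R_inv_def using A_poly_T_commute vc by simp
  also have "cnj (l u (A (R_inv v))) = l (A (R_inv v)) u" using l_conj_sym[of "A (R_inv v)" u] uc R_inv_carrier by simp
  also have "complex_of_real (1/L) * l (A (R_inv v)) u = l (K v) u"
    unfolding K_def using uc R_inv_carrier by (simp add: hermitian_smult_left[OF herm])
  finally show ?thesis .
qed

lemma K_N_commute: "u \<in> U \<Longrightarrow> K (N u) = N (K u)"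
proof -
  assume u: "u \<in> U"
  have "R_inv (N u) = N (R_inv u)" unfolding R_inv_def N_def using poly_T_commute u by simp
  hence "K (N u) = complex_of_real (1/L) \<cdot>\<^sub>v N (A (R_inv u))"
    unfolding K_def N_def using A_poly_T_commute R_inv_carrier by simp
  also have "\<dots> = N (K u)" unfolding K_def N_def using poly_T_smult A_carrier R_inv_carrier by simp
  finally show ?thesis .
qed

lemma linear_N: "linear_on n U N" unfolding N_def by (rule linear_poly_T)

lemma N_self_adjoint: "u \<in> U \<Longrightarrow> v \<in> U \<Longrightarrow> l (N u) v = l u (N v)"
  unfolding N_def using poly_T_self_adjoint U_carrier by simp

lemma linear_T_U: "linear_on n U T"
  unfolding linear_on_def using T_U linear_onD[OF linear_T] U_carrier by auto

lemma image_Tk_eq_image_Nk: "(T ^^ k) ` U = (N ^^ k) ` U"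
proof
  show "(T ^^ k) ` U \<subseteq> (N ^^ k) ` U"
  proof
    fix x assume "x \<in> (T ^^ k) ` U"
    then obtain u where u: "u \<in> U" "x = (T ^^ k) u" by auto
    have "(T_div_N ^^ k) u \<in> U" unfolding T_div_N_def using poly_T_funpow_U u by simp
    thus "x \<in> (N ^^ k) ` U" using Tk_eq_Nk[OF u(1)] u(2) by auto
  qed
  show "(N ^^ k) ` U \<subseteq> (T ^^ k) ` U"
  proof
    fix x assume "x \<in> (N ^^ k) ` U"
    then obtain u where u: "u \<in> U" "x = (N ^^ k) u" by auto
    have "(N_div_T ^^ k) u \<in> U" unfolding N_div_T_def using poly_T_funpow_U u by simp
    thus "x \<in> (T ^^ k) ` U" using Nk_eq_Tk[OF u(1)] u(2) by auto
  qed
qed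

end

section \<open>Chain bases for a nilpotent operator commuting with a conjugation\<close>

locale conj_nilpotent =
  fixes n :: nat and l :: "complex vec \<Rightarrow> complex vec \<Rightarrow> complex"
    and U :: "complex vec set" and K N :: "complex vec \<Rightarrow> complex vec"
  assumes herm: "hermitian_form n l"
    and subspace_U: "vec_subspace n U"
    and antilinear_K: "antilinear_on n U K"
    and K_involution: "\<And>u. u \<in> U \<Longrightarrow> K (K u) = u"
    and K_self_adjoint: "\<And>u v. u \<in> U \<Longrightarrow> v \<in> U \<Longrightarrow> l (K u) v = l (K v) u"
    and linear_N: "linear_on n U N"
    and N_K_commute: "\<And>u. u \<in> U \<Longrightarrow> N (K u) = K (N u)"
    and N_self_adjoint: "\<And>u v. u \<in> U \<Longrightarrow> v \<in> U \<Longrightarrow> l (N u) v = l u (N v)"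
    and N_nilpotent: "\<And>u. u \<in> U \<Longrightarrow> (N ^^ n) u = 0\<^sub>v n"
begin

lemma U_carrier: "u \<in> U \<Longrightarrow> u \<in> carrier_vec n" using vec_subspaceD(1)[OF subspace_U] by auto

lemma linear_Nk: "linear_on n U (N ^^ k)" by (rule linear_on_funpow[OF linear_N])

lemma Nk_U: "u \<in> U \<Longrightarrow> (N ^^ k) u \<in> U" using linear_onD(1)[OF linear_Nk] .

lemma Nk_add: "u \<in> U \<Longrightarrow> v \<in> U \<Longrightarrow> (N ^^ k) (u + v) = (N ^^ k) u + (N ^^ k) v"
  using linear_onD(2)[OF linear_Nk] .

lemma Nk_smult: "u \<in> U \<Longrightarrow> (N ^^ k) (z \<cdot>\<^sub>v u) = z \<cdot>\<^sub>v (N ^^ k) u"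
  using linear_onD(3)[OF linear_Nk] .

lemma Nk_zero: "(N ^^ k) (0\<^sub>v n) = 0\<^sub>v n" using linear_on_zero[OF subspace_U linear_Nk] .

lemma Nk_self_adjoint: "u \<in> U \<Longrightarrow> v \<in> U \<Longrightarrow> l ((N ^^ k) u) v = l u ((N ^^ k) v)"
proof (induction k arbitrary: v)
  case (Suc k)
  have "l ((N ^^ Suc k) u) v = l ((N ^^ k) u) (N v)" using Suc N_self_adjoint Nk_U by simp
  also have "\<dots> = l u ((N ^^ k) (N v))" using Suc linear_onD(1)[OF linear_N] by simp
  finally show ?case by (simp add: funpow_swap1)
qed simp

lemma Nk_K_commute: "u \<in> U \<Longrightarrow> (N ^^ k) (K u) = K ((N ^^ k) u)"
proof (induction k)
  case (Suc k) thus ?case using N_K_commute Nk_U by simp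
qed simp

lemma K_U: "u \<in> U \<Longrightarrow> K u \<in> U" using antilinear_onD(1)[OF antilinear_K] .
lemma K_add: "u \<in> U \<Longrightarrow> v \<in> U \<Longrightarrow> K (u + v) = K u + K v" using antilinear_onD(2)[OF antilinear_K] .
lemma K_smult: "u \<in> U \<Longrightarrow> K (z \<cdot>\<^sub>v u) = cnj z \<cdot>\<^sub>v K u" using antilinear_onD(3)[OF antilinear_K] .

definition real_vec :: "complex vec \<Rightarrow> bool" where "real_vec v \<longleftrightarrow> v \<in> U \<and> K v = v"

lemma real_vec_U: "real_vec v \<Longrightarrow> v \<in> U"
  unfolding real_vec_def by simp

lemma real_vec_Nk: "real_vec v \<Longrightarrow> real_vec ((N ^^ k) v)"
  unfolding real_vec_def using Nk_U Nk_K_commute by metis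

lemma real_vec_add: "real_vec a \<Longrightarrow> real_vec b \<Longrightarrow> real_vec (a + b)"
  unfolding real_vec_def using K_add vec_subspaceD(3)[OF subspace_U] by simp

lemma real_vec_smult: "real_vec a \<Longrightarrow> real_vec (complex_of_real r \<cdot>\<^sub>v a)"
  unfolding real_vec_def using K_smult vec_subspaceD(4)[OF subspace_U] by simp

lemma real_vec_sym: "real_vec a \<Longrightarrow> real_vec b \<Longrightarrow> l a b = l b a"
  unfolding real_vec_def using K_self_adjoint by metis

lemma real_vec_form_real: "real_vec a \<Longrightarrow> real_vec b \<Longrightarrow> cnj (l a b) = l a b"
proof -
  assume a: "real_vec a" and b: "real_vec b"
  have "l a b = cnj (l b a)" using hermitian_conj_sym[OF herm] a b U_carrier unfolding real_vec_def by blast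
  thus ?thesis using real_vec_sym[OF a b] by simp
qed

text \<open>Listed from N^(s-1) v down to v, so that N and A get their 1s above the diagonal.\<close>
definition chain :: "nat \<Rightarrow> complex vec \<Rightarrow> complex vec list" where
  "chain s v = map (\<lambda>i. (N ^^ (s - 1 - i)) v) [0..<s]"

lemma length_chain[simp]: "length (chain s v) = s" unfolding chain_def by simp

lemma chain_nth: "i < s \<Longrightarrow> chain s v ! i = (N ^^ (s - 1 - i)) v" unfolding chain_def by simp

lemma in_set_chain: "x \<in> set (chain s v) \<longleftrightarrow> (\<exists>i<s. x = (N ^^ i) v)"
proof
  assume "x \<in> set (chain s v)"
  then obtain j where j: "j < s" "x = (N ^^ (s - 1 - j)) v" unfolding chain_def by auto
  thus "\<exists>i<s. x = (N ^^ i) v" by (intro exI[of _ "s - 1 - j"]) auto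
next
  assume "\<exists>i<s. x = (N ^^ i) v"
  then obtain i where i: "i < s" "x = (N ^^ i) v" by auto
  hence "chain s v ! (s - 1 - i) = x" by (simp add: chain_nth)
  moreover have "s - 1 - i < length (chain s v)" using i by simp
  ultimately show "x \<in> set (chain s v)" by (metis nth_mem)
qed

definition reducing :: "complex vec set \<Rightarrow> bool" where
  "reducing Y \<longleftrightarrow> vec_subspace n Y \<and> Y \<subseteq> U \<and> (\<forall>y\<in>Y. K y \<in> Y) \<and> (\<forall>y\<in>Y. N y \<in> Y)
     \<and> (\<forall>u\<in>Y. (\<forall>w\<in>Y. l u w = 0) \<longrightarrow> u = 0\<^sub>v n)"

lemma reducing_Nk: "reducing Y \<Longrightarrow> y \<in> Y \<Longrightarrow> (N ^^ k) y \<in> Y"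
  unfolding reducing_def by (induction k) auto

lemma reducing_subspace: "reducing Y \<Longrightarrow> vec_subspace n Y"
  unfolding reducing_def by simp

lemma reducing_U: "reducing Y \<Longrightarrow> y \<in> Y \<Longrightarrow> y \<in> U"
  unfolding reducing_def by auto

lemma reducing_carrier: "reducing Y \<Longrightarrow> y \<in> Y \<Longrightarrow> y \<in> carrier_vec n"
  using reducing_U U_carrier by blast

lemma real_vec_carrier: "real_vec v \<Longrightarrow> v \<in> carrier_vec n" unfolding real_vec_def using U_carrier by simp

lemma real_imag_decomp:
  assumes G: "reducing Y" and y: "y \<in> Y"
  shows "\<exists>a b. real_vec a \<and> real_vec b \<and> a \<in> Y \<and> b \<in> Y \<and> y = a + \<i> \<cdot>\<^sub>v b"
proof -
  have sY: "vec_subspace n Y" using G unfolding reducing_def by simp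
  have yU: "y \<in> U" using reducing_U[OF G y] .
  have yc: "y \<in> carrier_vec n" using U_carrier yU by simp
  have KyY: "K y \<in> Y" using G y unfolding reducing_def by simp
  have Ky: "K y \<in> U" using K_U yU by simp
  have Kyc: "K y \<in> carrier_vec n" using U_carrier Ky by simp
  define a where "a = complex_of_real (1/2) \<cdot>\<^sub>v (y + K y)"
  define b where "b = (- \<i> / 2) \<cdot>\<^sub>v (y + (-1) \<cdot>\<^sub>v K y)"
  have aY: "a \<in> Y" unfolding a_def using y KyY vec_subspaceD(3,4)[OF sY] by simp
  have bY: "b \<in> Y" unfolding b_def using y KyY vec_subspaceD(3,4)[OF sY] by simp
  have s1: "y + K y \<in> U" using yU Ky vec_subspaceD(3)[OF subspace_U] by simp
  have s2: "(-1) \<cdot>\<^sub>v K y \<in> U" using Ky vec_subspaceD(4)[OF subspace_U] by simp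
  have s3: "y + (-1) \<cdot>\<^sub>v K y \<in> U" using yU s2 vec_subspaceD(3)[OF subspace_U] by simp
  have "K (y + K y) = y + K y" using K_add[OF yU Ky] K_involution[OF yU] Kyc yc by (simp add: comm_add_vec)
  hence ra: "real_vec a" unfolding real_vec_def a_def using K_smult s1 vec_subspaceD(4)[OF subspace_U] by simp
  have "K (y + (-1) \<cdot>\<^sub>v K y) = K y + (-1) \<cdot>\<^sub>v y"
    using K_add[OF yU s2] K_smult[OF Ky] K_involution[OF yU] by simp
  hence "K b = (\<i> / 2) \<cdot>\<^sub>v (K y + (-1) \<cdot>\<^sub>v y)" unfolding b_def using K_smult[OF s3] by simp
  also have "\<dots> = b" unfolding b_def using yc Kyc by (intro eq_vecI) (auto simp: field_simps)
  finally have rb: "real_vec b" unfolding real_vec_def b_def using s3 vec_subspaceD(4)[OF subspace_U] by simp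
  have "y = a + \<i> \<cdot>\<^sub>v b" unfolding a_def b_def using yc Kyc by (intro eq_vecI) (auto simp: field_simps)
  thus ?thesis using ra rb aY bY by blast
qed

definition moment :: "nat \<Rightarrow> complex vec \<Rightarrow> complex" where "moment k v = l ((N ^^ k) v) v"

lemma moment_real: "real_vec v \<Longrightarrow> moment k v = complex_of_real (Re (moment k v))"
proof -
  assume v: "real_vec v"
  have "cnj (moment k v) = moment k v" unfolding moment_def using real_vec_form_real[OF real_vec_Nk[OF v] v] .
  thus ?thesis by (auto simp: complex_eq_iff)
qed

lemma form_Nk_Nk_eq_moment: "v \<in> U \<Longrightarrow> l ((N ^^ i) v) ((N ^^ j) v) = moment (i + j) v"
proof -
  assume v: "v \<in> U"
  have "l ((N ^^ i) v) ((N ^^ j) v) = l ((N ^^ j) ((N ^^ i) v)) v"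
    using Nk_self_adjoint[of "(N ^^ i) v" v j] Nk_U v by simp
  thus ?thesis unfolding moment_def by (simp add: funpow_apply_add add.commute)
qed

lemma moment_vanishes:
  assumes G: "reducing Y" and v: "v \<in> Y" and kill: "\<forall>y\<in>Y. (N ^^ s) y = 0\<^sub>v n" and k: "k \<ge> s"
  shows "moment k v = 0"
proof -
  have "(N ^^ k) v = (N ^^ (k - s)) ((N ^^ s) v)" using k by (simp add: funpow_apply_add)
  also have "\<dots> = 0\<^sub>v n" using kill v Nk_zero by simp
  finally show ?thesis unfolding moment_def using hermitian_zero_left[OF herm] reducing_carrier[OF G v] by simp
qed

lemma moment_shift_update:
  assumes v: "real_vec v"
  shows "moment k (v + complex_of_real r \<cdot>\<^sub>v (N ^^ p) v)
    = moment k v + 2 * complex_of_real r * moment (k + p) v + (complex_of_real r)^2 * moment (k + 2 * p) v"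
proof -
  let ?a = "complex_of_real r"
  have vU: "v \<in> U" using v unfolding real_vec_def by simp
  have vc: "v \<in> carrier_vec n" using U_carrier vU by simp
  have pU: "(N ^^ p) v \<in> U" using Nk_U vU by simp
  have apU: "?a \<cdot>\<^sub>v (N ^^ p) v \<in> U" using pU vec_subspaceD(4)[OF subspace_U] by simp
  have c: "\<And>k. (N ^^ k) v \<in> carrier_vec n" using Nk_U vU U_carrier by blast
  have Nx: "(N ^^ k) (v + ?a \<cdot>\<^sub>v (N ^^ p) v) = (N ^^ k) v + ?a \<cdot>\<^sub>v (N ^^ (k + p)) v"
    using Nk_add[OF vU apU] Nk_smult[OF pU] by (simp add: funpow_apply_add)
  have "moment k (v + ?a \<cdot>\<^sub>v (N ^^ p) v) = l ((N ^^ k) v + ?a \<cdot>\<^sub>v (N ^^ (k + p)) v) (v + ?a \<cdot>\<^sub>v (N ^^ p) v)"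
    unfolding moment_def Nx ..
  also have "\<dots> = l ((N ^^ k) v) v + cnj ?a * l ((N ^^ k) v) ((N ^^ p) v)
      + ?a * l ((N ^^ (k + p)) v) v + ?a * cnj ?a * l ((N ^^ (k + p)) v) ((N ^^ p) v)"
    using vc c by (simp add: hermitian_add_left[OF herm] hermitian_add_right[OF herm] hermitian_smult_left[OF herm] hermitian_smult_right[OF herm] algebra_simps)
  also have "\<dots> = moment k v + ?a * moment (k + p) v + ?a * moment (k + p) v + ?a * ?a * moment (k + 2 * p) v"
  proof -
    have h1: "l ((N^^k) v) ((N^^p) v) = moment (k+p) v" using form_Nk_Nk_eq_moment vU by simp
    have h2: "l ((N^^(k+p)) v) v = moment (k+p) v" unfolding moment_def ..
    have h3: "l ((N^^(k+p)) v) ((N^^p) v) = moment (k+2*p) v" using form_Nk_Nk_eq_moment[of v "k+p" p] vU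
      by (simp add: mult_2 add.assoc)
    have h4: "l ((N^^k) v) v = moment k v" unfolding moment_def ..
    show ?thesis unfolding h1 h2 h3 h4 by simp
  qed
  finally show ?thesis by (simp add: power2_eq_square algebra_simps)
qed

definition normal_chain :: "nat \<times> complex \<times> complex vec \<Rightarrow> bool" where
  "normal_chain c \<longleftrightarrow> (case c of (s, e, v) \<Rightarrow> 0 < s \<and> real_vec v \<and> (e = 1 \<or> e = -1) \<and> (N ^^ s) v = 0\<^sub>v n
     \<and> (\<forall>i j. l ((N ^^ i) v) ((N ^^ j) v) = (if i + j = s - 1 then e else 0)))"

lemma nilpotency_index_exists:
  assumes G: "reducing Y" and y0: "y0 \<in> Y" "y0 \<noteq> 0\<^sub>v n"
  obtains s y where "0 < s" "\<forall>y\<in>Y. (N ^^ s) y = 0\<^sub>v n" "y \<in> Y" "(N ^^ (s - 1)) y \<noteq> 0\<^sub>v n"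
proof -
  define s where "s = (LEAST k. \<forall>y\<in>Y. (N ^^ k) y = 0\<^sub>v n)"
  have "\<forall>y\<in>Y. (N ^^ n) y = 0\<^sub>v n" using N_nilpotent reducing_U[OF G] by blast
  hence kill: "\<forall>y\<in>Y. (N ^^ s) y = 0\<^sub>v n" unfolding s_def by (rule LeastI)
  have spos: "0 < s" using kill y0 by (metis funpow_0 gr0I)
  have "\<not> (\<forall>y\<in>Y. (N ^^ (s - 1)) y = 0\<^sub>v n)"
    using not_less_Least[of "s - 1" "\<lambda>k. \<forall>y\<in>Y. (N ^^ k) y = 0\<^sub>v n"] spos unfolding s_def by simp
  thus ?thesis using that spos kill by blast
qed

lemma real_vec_form_Nk_sym: "real_vec p \<Longrightarrow> real_vec q \<Longrightarrow> l ((N ^^ k) q) p = l ((N ^^ k) p) q"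
  using Nk_self_adjoint real_vec_sym[OF _ real_vec_Nk] unfolding real_vec_def by metis

lemma real_pair_form_Nk_nonzero:
  assumes G: "reducing Y" and y: "y \<in> Y" and w: "w \<in> Y" and nz: "l ((N ^^ k) y) w \<noteq> 0"
  shows "\<exists>p q. real_vec p \<and> real_vec q \<and> p \<in> Y \<and> q \<in> Y \<and> l ((N ^^ k) p) q \<noteq> 0"
proof (rule ccontr)
  assume no: "\<not> ?thesis"
  obtain a1 b1 where ab1: "real_vec a1" "real_vec b1" "a1 \<in> Y" "b1 \<in> Y" "y = a1 + \<i> \<cdot>\<^sub>v b1"
    using real_imag_decomp[OF G y] by blast
  obtain a2 b2 where ab2: "real_vec a2" "real_vec b2" "a2 \<in> Y" "b2 \<in> Y" "w = a2 + \<i> \<cdot>\<^sub>v b2"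
    using real_imag_decomp[OF G w] by blast
  have U: "a1 \<in> U" "b1 \<in> U" "\<i> \<cdot>\<^sub>v b1 \<in> U"
    using ab1 vec_subspaceD(4)[OF subspace_U] unfolding real_vec_def by auto
  have "(N ^^ k) y = (N ^^ k) a1 + \<i> \<cdot>\<^sub>v (N ^^ k) b1"
    unfolding ab1(5) using Nk_add[OF U(1,3)] Nk_smult[OF U(2)] by simp
  moreover have "(N ^^ k) a1 \<in> carrier_vec n" "(N ^^ k) b1 \<in> carrier_vec n" "a2 \<in> carrier_vec n" "b2 \<in> carrier_vec n"
    using real_vec_carrier real_vec_Nk ab1 ab2 by blast+
  ultimately have "l ((N ^^ k) y) w = l ((N ^^ k) a1) a2 + cnj \<i> * l ((N ^^ k) a1) b2
      + \<i> * l ((N ^^ k) b1) a2 + \<i> * cnj \<i> * l ((N ^^ k) b1) b2"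
    unfolding ab2(5) by (simp add: hermitian_add_left[OF herm] hermitian_add_right[OF herm]
        hermitian_smult_left[OF herm] hermitian_smult_right[OF herm] algebra_simps)
  also have "\<dots> = 0" using no ab1 ab2 by auto
  finally show False using nz by contradiction
qed

text \<open>Polarisation: if the symmetric form l(N^k p, q) on real vectors does not vanish,
  then neither does its diagonal.\<close>
lemma real_vec_moment_nonzero:
  assumes pq: "real_vec p" "real_vec q" "p \<in> Y" "q \<in> Y" and Y: "vec_subspace n Y"
    and nz: "l ((N ^^ k) p) q \<noteq> 0"
  shows "\<exists>v. real_vec v \<and> v \<in> Y \<and> moment k v \<noteq> 0"
proof (cases "moment k p = 0 \<and> moment k q = 0")
  case True
  have U: "p \<in> U" "q \<in> U" using pq unfolding real_vec_def by auto
  have "(N ^^ k) p \<in> carrier_vec n" "(N ^^ k) q \<in> carrier_vec n" "p \<in> carrier_vec n" "q \<in> carrier_vec n"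
    using real_vec_carrier real_vec_Nk pq by blast+
  hence "moment k (p + q) = moment k p + l ((N ^^ k) p) q + l ((N ^^ k) q) p + moment k q"
    unfolding moment_def using Nk_add[OF U] by (simp add: hermitian_add_left[OF herm] hermitian_add_right[OF herm])
  also have "\<dots> = 2 * l ((N ^^ k) p) q" using True real_vec_form_Nk_sym[OF pq(1,2)] by simp
  finally have "moment k (p + q) \<noteq> 0" using nz by simp
  moreover have "real_vec (p + q)" "p + q \<in> Y" using real_vec_add pq vec_subspaceD(3)[OF Y] by auto
  ultimately show ?thesis by blast
next
  case False thus ?thesis using pq by blast
qed

text \<open>Adding r N^(j+1) v changes the moment of order s-2-j by 2 r times the top moment
  (and no moment of order \<ge> s-1), so a suitable real r kills it.\<close>
lemma moment_kill_step:
  assumes G: "reducing Y" and v: "real_vec v" "v \<in> Y" and kill: "\<forall>y\<in>Y. (N ^^ s) y = 0\<^sub>v n"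
    and j: "j + 2 \<le> s" and top: "moment (s - 1) v \<noteq> 0"
    and low: "\<And>i. 1 \<le> i \<Longrightarrow> i \<le> j \<Longrightarrow> moment (s - 1 - i) v = 0"
  obtains v' where "real_vec v'" "v' \<in> Y" "moment (s - 1) v' = moment (s - 1) v"
    "\<And>i. 1 \<le> i \<Longrightarrow> i \<le> Suc j \<Longrightarrow> moment (s - 1 - i) v' = 0"
proof -
  have sY: "vec_subspace n Y" using G unfolding reducing_def by simp
  define c where "c = Re (moment (s - 1) v)"
  define d where "d = Re (moment (s - 2 - j) v)"
  have ac: "moment (s - 1) v = complex_of_real c" unfolding c_def by (rule moment_real[OF v(1)])
  have cnz: "c \<noteq> 0" using top ac by auto
  define r where "r = - d / (2 * c)"
  define v' where "v' = v + complex_of_real r \<cdot>\<^sub>v (N ^^ Suc j) v"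
  have rv': "real_vec v'" unfolding v'_def by (intro real_vec_add real_vec_smult real_vec_Nk v(1))
  have v'Y: "v' \<in> Y" unfolding v'_def
    by (intro vec_subspaceD(3)[OF sY] vec_subspaceD(4)[OF sY] reducing_Nk[OF G v(2)] v(2))
  have upd: "\<And>k. moment k v' = moment k v + 2 * complex_of_real r * moment (k + Suc j) v
      + (complex_of_real r)^2 * moment (k + 2 * Suc j) v"
    unfolding v'_def by (rule moment_shift_update[OF v(1)])
  have hi: "\<And>k. k \<ge> s \<Longrightarrow> moment k v = 0" using moment_vanishes[OF G v(2) kill] by simp
  have "moment (s - 1) v' = moment (s - 1) v" using upd[of "s - 1"] hi j by simp
  moreover have "moment (s - 1 - i) v' = 0" if i: "1 \<le> i" "i \<le> Suc j" for i
  proof (cases "i \<le> j")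
    case True
    thus ?thesis using upd[of "s - 1 - i"] low[OF i(1) True] hi j i by simp
  next
    case False
    hence ii: "i = Suc j" using i by simp
    have "moment (s - 1 - i) v = complex_of_real d" unfolding d_def ii
      by (simp add: moment_real[OF v(1), symmetric] numeral_2_eq_2)
    moreover have "s - 1 - i + Suc j = s - 1" "s \<le> s - 1 - i + 2 * Suc j" using ii j by auto
    ultimately have "moment (s - 1 - i) v' = complex_of_real (d + 2 * r * c)"
      using upd[of "s - 1 - i"] hi ac by simp
    also have "d + 2 * r * c = 0" unfolding r_def using cnz by (simp add: field_simps)
    finally show ?thesis by simp
  qed
  ultimately show ?thesis using that rv' v'Y by blast
qed

lemma moment_kill_lower:
  assumes G: "reducing Y" and v: "real_vec v" "v \<in> Y" and kill: "\<forall>y\<in>Y. (N ^^ s) y = 0\<^sub>v n"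
    and s: "0 < s" and top: "moment (s - 1) v \<noteq> 0"
  obtains v' where "real_vec v'" "v' \<in> Y" "moment (s - 1) v' = moment (s - 1) v"
    "\<And>k. k < s - 1 \<Longrightarrow> moment k v' = 0"
proof -
  have "j + 1 \<le> s \<Longrightarrow> \<exists>v'. real_vec v' \<and> v' \<in> Y \<and> moment (s - 1) v' = moment (s - 1) v
      \<and> (\<forall>i. 1 \<le> i \<and> i \<le> j \<longrightarrow> moment (s - 1 - i) v' = 0)" for j
  proof (induction j)
    case (Suc j)
    then obtain v1 where v1: "real_vec v1" "v1 \<in> Y" "moment (s - 1) v1 = moment (s - 1) v"
      "\<And>i. 1 \<le> i \<Longrightarrow> i \<le> j \<Longrightarrow> moment (s - 1 - i) v1 = 0" by auto
    obtain v2 where "real_vec v2" "v2 \<in> Y" "moment (s - 1) v2 = moment (s - 1) v1"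
      "\<And>i. 1 \<le> i \<Longrightarrow> i \<le> Suc j \<Longrightarrow> moment (s - 1 - i) v2 = 0"
      using moment_kill_step[OF G v1(1,2) kill _ _ v1(4)] Suc.prems top v1(3) by auto
    thus ?case using v1(3) by auto
  qed (use v in auto)
  from this[of "s - 1"] obtain v' where v': "real_vec v'" "v' \<in> Y" "moment (s - 1) v' = moment (s - 1) v"
    "\<And>i. 1 \<le> i \<Longrightarrow> i \<le> s - 1 \<Longrightarrow> moment (s - 1 - i) v' = 0"
    using s by auto
  have "moment k v' = 0" if "k < s - 1" for k
    using v'(4)[of "s - 1 - k"] that by simp
  thus ?thesis using that v' by blast
qed

lemma normal_chain_normalise:
  assumes G: "reducing Y" and v: "real_vec v" "v \<in> Y" and kill: "\<forall>y\<in>Y. (N ^^ s) y = 0\<^sub>v n"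
    and s: "0 < s" and top: "moment (s - 1) v \<noteq> 0" and low: "\<And>k. k < s - 1 \<Longrightarrow> moment k v = 0"
  shows "\<exists>e v'. normal_chain (s, e, v') \<and> v' \<in> Y"
proof -
  define c where "c = Re (moment (s - 1) v)"
  have ac: "moment (s - 1) v = complex_of_real c" unfolding c_def by (rule moment_real[OF v(1)])
  have cnz: "c \<noteq> 0" using top ac by auto
  define t where "t = 1 / sqrt \<bar>c\<bar>"
  define v' where "v' = complex_of_real t \<cdot>\<^sub>v v"
  define e where "e = complex_of_real (sgn c)"
  have rv': "real_vec v'" unfolding v'_def using real_vec_smult v(1) by simp
  have v'Y: "v' \<in> Y" unfolding v'_def using v(2) vec_subspaceD(4) G unfolding reducing_def by blast
  have vU: "v \<in> U" using v(1) unfolding real_vec_def by simp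
  have mom: "moment k v' = complex_of_real (t * t) * moment k v" for k
  proof -
    have "(N ^^ k) v' = complex_of_real t \<cdot>\<^sub>v (N ^^ k) v" unfolding v'_def using Nk_smult vU by simp
    thus ?thesis unfolding moment_def v'_def using real_vec_carrier[OF real_vec_Nk[OF v(1)]] real_vec_carrier[OF v(1)]
      by (simp add: hermitian_smult_left[OF herm] hermitian_smult_right[OF herm])
  qed
  have "t * t * c = sgn c" unfolding t_def using cnz by (simp add: sgn_real_def divide_simps abs_if)
  hence "moment (s - 1) v' = e" unfolding e_def mom ac by (metis of_real_mult)
  moreover have "moment k v' = 0" if "k \<noteq> s - 1" for k
    using that mom low moment_vanishes[OF G v(2) kill, of k] by (cases "k < s - 1") auto
  ultimately have gram: "l ((N ^^ i) v') ((N ^^ j) v') = (if i + j = s - 1 then e else 0)" for i j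
    using form_Nk_Nk_eq_moment[of v' i j] rv' unfolding real_vec_def by auto
  have "e = 1 \<or> e = -1" unfolding e_def using cnz by (cases "c > 0") auto
  moreover have "(N ^^ s) v' = 0\<^sub>v n" using kill v'Y by simp
  ultimately show ?thesis unfolding normal_chain_def using s rv' gram v'Y by blast
qed

lemma normal_chainD:
  assumes "normal_chain (s, e, v)"
  shows "0 < s" "real_vec v" "e = 1 \<or> e = -1" "e \<noteq> 0" "e * e = 1" "(N ^^ s) v = 0\<^sub>v n"
    "l ((N ^^ i) v) ((N ^^ j) v) = (if i + j = s - 1 then e else 0)"
  using assms unfolding normal_chain_def by auto

lemma normal_chain_exists:
  assumes G: "reducing Y" and y0: "y0 \<in> Y" "y0 \<noteq> 0\<^sub>v n"
  shows "\<exists>s e v. normal_chain (s, e, v) \<and> v \<in> Y \<and> (\<forall>y\<in>Y. (N ^^ s) y = 0\<^sub>v n)"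
proof -
  have sY: "vec_subspace n Y" using G unfolding reducing_def by simp
  obtain s y where s: "0 < s" and kill: "\<forall>y\<in>Y. (N ^^ s) y = 0\<^sub>v n"
    and y: "y \<in> Y" "(N ^^ (s - 1)) y \<noteq> 0\<^sub>v n"
    using nilpotency_index_exists[OF G y0] .
  obtain w where w: "w \<in> Y" "l ((N ^^ (s - 1)) y) w \<noteq> 0"
    using G y(2) reducing_Nk[OF G y(1)] unfolding reducing_def by blast
  obtain p q where "real_vec p" "real_vec q" "p \<in> Y" "q \<in> Y" "l ((N ^^ (s - 1)) p) q \<noteq> 0"
    using real_pair_form_Nk_nonzero[OF G y(1) w] by blast
  then obtain v0 where v0: "real_vec v0" "v0 \<in> Y" "moment (s - 1) v0 \<noteq> 0"
    using real_vec_moment_nonzero[OF _ _ _ _ sY] by blast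
  obtain v where v: "real_vec v" "v \<in> Y" "moment (s - 1) v = moment (s - 1) v0"
    "\<And>k. k < s - 1 \<Longrightarrow> moment k v = 0"
    using moment_kill_lower[OF G v0(1,2) kill s v0(3)] by blast
  thus ?thesis using normal_chain_normalise[OF G v(1,2) kill s] v0(3) kill by auto
qed

definition chains :: "(nat \<times> complex \<times> complex vec) list \<Rightarrow> complex vec list" where
  "chains Lc = concat (map (\<lambda>(s, e, v). chain s v) Lc)"

lemma chains_Nil[simp]: "chains [] = []" unfolding chains_def by simp
lemma chains_Cons[simp]: "chains ((s, e, v) # Lc) = chain s v @ chains Lc" unfolding chains_def by simp

fun normal_chain_list :: "(nat \<times> complex \<times> complex vec) list \<Rightarrow> bool" where
  "normal_chain_list [] = True"
| "normal_chain_list ((s, e, v) # Lc) = (normal_chain (s, e, v)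
     \<and> (\<forall>x\<in>set (chain s v). \<forall>y\<in>set (chains Lc). l x y = 0 \<and> l y x = 0) \<and> normal_chain_list Lc)"

lemma normal_chain_list_normal: "normal_chain_list Lc \<Longrightarrow> c \<in> set Lc \<Longrightarrow> normal_chain c"
  by (induction Lc rule: normal_chain_list.induct) auto

context
  fixes Y s e v
  assumes G: "reducing Y" and gc: "normal_chain (s, e, v)" and vY: "v \<in> Y"
begin

lemma chain_head_Nk_carrier: "(N ^^ i) v \<in> carrier_vec n"
  using reducing_carrier[OF G reducing_Nk[OF G vY]] .

lemma chain_subset: "set (chain s v) \<subseteq> Y"
  using reducing_Nk[OF G vY] by (auto simp: in_set_chain)

lemma chain_carrier: "set (chain s v) \<subseteq> carrier_vec n"
  using chain_head_Nk_carrier by (auto simp: in_set_chain)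

lemma form_lin_comb_chain_Nk:
  assumes c: "c \<in> carrier_vec s" and j: "j < s"
  shows "l (lin_comb n (chain s v) c) ((N ^^ j) v) = c $ j * e"
proof -
  have "l (lin_comb n (chain s v) c) ((N ^^ j) v) = (\<Sum>i<s. c $ i * l (chain s v ! i) ((N ^^ j) v))"
    using hermitian_lin_comb_left[OF herm chain_carrier chain_head_Nk_carrier] by simp
  also have "\<dots> = (\<Sum>i<s. if i = j then c $ j * e else 0)"
  proof (intro sum.cong refl)
    fix i assume i: "i \<in> {..<s}"
    have "l (chain s v ! i) ((N ^^ j) v) = (if s - 1 - i + j = s - 1 then e else 0)"
      using i by (simp add: chain_nth normal_chainD(7)[OF gc])
    also have "\<dots> = (if i = j then e else 0)" using i j by auto
    finally show "c $ i * l (chain s v ! i) ((N ^^ j) v) = (if i = j then c $ j * e else 0)" by auto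
  qed
  also have "\<dots> = c $ j * e" using j by simp
  finally show ?thesis .
qed

definition chain_orth where "chain_orth = {y \<in> Y. \<forall>i<s. l y ((N ^^ i) v) = 0}"

lemma chain_orth_subset: "chain_orth \<subseteq> Y" unfolding chain_orth_def by auto

lemma chain_orth_carrier: "y \<in> chain_orth \<Longrightarrow> y \<in> carrier_vec n"
  using reducing_carrier[OF G] chain_orth_subset by blast

text \<open>Orthogonal projection onto the chain, using that its Gram matrix is e S_s with e^2 = 1.\<close>
lemma chain_orth_projection:
  assumes w: "w \<in> Y"
  shows "\<exists>c\<in>carrier_vec s. w + (-1) \<cdot>\<^sub>v lin_comb n (chain s v) c \<in> chain_orth"
proof -
  define c where "c = vec s (\<lambda>i. e * l w ((N ^^ i) v))"
  have cc: "c \<in> carrier_vec s" unfolding c_def by simp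
  have wc: "w \<in> carrier_vec n" using reducing_carrier[OF G w] .
  have "w + (-1) \<cdot>\<^sub>v lin_comb n (chain s v) c \<in> Y"
    using w lin_comb_in_subspace[OF reducing_subspace[OF G] chain_subset]
      vec_subspaceD(3,4)[OF reducing_subspace[OF G]] by simp
  moreover have "l (w + (-1) \<cdot>\<^sub>v lin_comb n (chain s v) c) ((N ^^ i) v) = 0" if i: "i < s" for i
  proof -
    have "l (w + (-1) \<cdot>\<^sub>v lin_comb n (chain s v) c) ((N ^^ i) v)
       = l w ((N ^^ i) v) - l (lin_comb n (chain s v) c) ((N ^^ i) v)"
      using wc chain_head_Nk_carrier by (simp add: hermitian_add_left[OF herm] hermitian_smult_left[OF herm])
    also have "\<dots> = l w ((N ^^ i) v) - e * l w ((N ^^ i) v) * e"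
      using form_lin_comb_chain_Nk[OF cc i] i unfolding c_def by simp
    also have "\<dots> = 0" using normal_chainD(5)[OF gc] by (simp add: algebra_simps)
    finally show ?thesis .
  qed
  ultimately show ?thesis using cc unfolding chain_orth_def by blast
qed

lemma vec_subspace_chain_orth: "vec_subspace n chain_orth"
  unfolding vec_subspace_def
proof (intro conjI ballI allI)
  show "chain_orth \<subseteq> carrier_vec n" using chain_orth_carrier by auto
  show "0\<^sub>v n \<in> chain_orth" unfolding chain_orth_def
    using vec_subspaceD(2)[OF reducing_subspace[OF G]] chain_head_Nk_carrier hermitian_zero_left[OF herm] by simp
next
  fix a b assume "a \<in> chain_orth" "b \<in> chain_orth"
  thus "a + b \<in> chain_orth" unfolding chain_orth_def
    using vec_subspaceD(3)[OF reducing_subspace[OF G]] chain_head_Nk_carrier reducing_carrier[OF G]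
    by (auto simp: hermitian_add_left[OF herm])
next
  fix z a assume "a \<in> chain_orth"
  thus "z \<cdot>\<^sub>v a \<in> chain_orth" unfolding chain_orth_def
    using vec_subspaceD(4)[OF reducing_subspace[OF G]] chain_head_Nk_carrier reducing_carrier[OF G]
    by (auto simp: hermitian_smult_left[OF herm])
qed

lemma K_chain_orth: "y \<in> chain_orth \<Longrightarrow> K y \<in> chain_orth"
proof -
  assume y: "y \<in> chain_orth"
  have yY: "y \<in> Y" and orth: "\<And>i. i < s \<Longrightarrow> l y ((N ^^ i) v) = 0" using y unfolding chain_orth_def by auto
  have yU: "y \<in> U" using reducing_U[OF G yY] .
  have vU: "v \<in> U" using real_vec_U[OF normal_chainD(2)[OF gc]] .
  have "l (K y) ((N ^^ i) v) = 0" if i: "i < s" for i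
  proof -
    have "l (K y) ((N ^^ i) v) = l (K ((N ^^ i) v)) y" using K_self_adjoint yU Nk_U vU by simp
    also have "\<dots> = l ((N ^^ i) v) y" using real_vec_Nk[OF normal_chainD(2)[OF gc]] unfolding real_vec_def by simp
    also have "\<dots> = cnj (l y ((N ^^ i) v))" using hermitian_conj_sym[OF herm] U_carrier[OF yU] chain_head_Nk_carrier by blast
    finally show ?thesis using orth[OF i] by simp
  qed
  moreover have "K y \<in> Y" using G yY unfolding reducing_def by simp
  ultimately show "K y \<in> chain_orth" unfolding chain_orth_def by simp
qed

lemma N_chain_orth: "y \<in> chain_orth \<Longrightarrow> N y \<in> chain_orth"
proof -
  assume y: "y \<in> chain_orth"
  have yY: "y \<in> Y" and orth: "\<And>i. i < s \<Longrightarrow> l y ((N ^^ i) v) = 0" using y unfolding chain_orth_def by auto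
  have yU: "y \<in> U" using reducing_U[OF G yY] .
  have vU: "v \<in> U" using real_vec_U[OF normal_chainD(2)[OF gc]] .
  have "l (N y) ((N ^^ i) v) = 0" if i: "i < s" for i
  proof -
    have "l (N y) ((N ^^ i) v) = l y ((N ^^ Suc i) v)" using N_self_adjoint yU Nk_U vU by simp
    also have "\<dots> = 0"
    proof (cases "Suc i < s")
      case True thus ?thesis using orth[of "Suc i"] by (simp del: funpow.simps)
    next
      case False hence "Suc i = s" using i by simp
      thus ?thesis using normal_chainD(6)[OF gc] hermitian_zero_right[OF herm U_carrier[OF yU]] by simp
    qed
    finally show ?thesis .
  qed
  moreover have "N y \<in> Y" using G yY unfolding reducing_def by simp
  ultimately show "N y \<in> chain_orth" unfolding chain_orth_def by simp
qed

lemma chain_orth_nondegenerate: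
  assumes u: "u \<in> chain_orth" and o: "\<forall>w\<in>chain_orth. l u w = 0"
  shows "u = 0\<^sub>v n"
proof -
  have uY: "u \<in> Y" and orth: "\<And>i. i < s \<Longrightarrow> l u ((N ^^ i) v) = 0" using u unfolding chain_orth_def by auto
  have uc: "u \<in> carrier_vec n" using reducing_carrier[OF G uY] .
  have "l u w = 0" if w: "w \<in> Y" for w
  proof -
    have wc: "w \<in> carrier_vec n" using reducing_carrier[OF G w] .
    obtain c where c: "c \<in> carrier_vec s" "w + (-1) \<cdot>\<^sub>v lin_comb n (chain s v) c \<in> chain_orth"
      using chain_orth_projection[OF w] by auto
    define p where "p = w + (-1) \<cdot>\<^sub>v lin_comb n (chain s v) c"
    have pc: "p \<in> carrier_vec n" unfolding p_def using wc by simp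
    have we: "w = p + lin_comb n (chain s v) c" unfolding p_def using wc by (intro eq_vecI) auto
    have "l u w = l u p + l u (lin_comb n (chain s v) c)" unfolding we using uc pc
      by (simp add: hermitian_add_right[OF herm])
    also have "l u (lin_comb n (chain s v) c) = (\<Sum>i<s. cnj (c $ i) * l u (chain s v ! i))"
      using hermitian_lin_comb_right[OF herm chain_carrier uc] by simp
    also have "\<dots> = 0" using orth by (intro sum.neutral) (auto simp: chain_nth)
    finally show ?thesis using o c(2) unfolding p_def by simp
  qed
  thus "u = 0\<^sub>v n" using G uY unfolding reducing_def by blast
qed

lemma reducing_chain_orth: "reducing chain_orth"
  unfolding reducing_def
  using vec_subspace_chain_orth chain_orth_subset reducing_U[OF G] K_chain_orth N_chain_orth
    chain_orth_nondegenerate by blast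

lemma chain_orth_orthogonal:
  assumes "x \<in> set (chain s v)" "y \<in> chain_orth"
  shows "l x y = 0 \<and> l y x = 0"
proof -
  obtain i where i: "i < s" "x = (N ^^ i) v" using assms(1) by (auto simp: in_set_chain)
  have "l y x = 0" using assms(2) i unfolding chain_orth_def by simp
  moreover have "l x y = cnj (l y x)"
    using hermitian_conj_sym[OF herm] i chain_head_Nk_carrier chain_orth_carrier[OF assms(2)] by blast
  ultimately show ?thesis by simp
qed

lemma indep_vecs_chain_append:
  assumes B: "set B \<subseteq> chain_orth" and ind: "indep_vecs n B"
  shows "indep_vecs n (chain s v @ B)"
  unfolding indep_vecs_def
proof (intro ballI impI)
  fix c assume c: "c \<in> carrier_vec (length (chain s v @ B))" and z: "lin_comb n (chain s v @ B) c = 0\<^sub>v n"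
  define c1 where "c1 = vec_first c s"
  define c2 where "c2 = vec_last c (length B)"
  have c12: "c = c1 @\<^sub>v c2" "c1 \<in> carrier_vec s" "c2 \<in> carrier_vec (length B)"
    using c unfolding c1_def c2_def by auto
  have z2: "lin_comb n (chain s v) c1 + lin_comb n B c2 = 0\<^sub>v n"
    using z c12 lin_comb_append_vec[of c1 "chain s v" c2 B n] by simp
  have BYp: "lin_comb n B c2 \<in> chain_orth" using lin_comb_in_subspace[OF vec_subspace_chain_orth B] .
  have "c1 $ j = 0" if j: "j < s" for j
  proof -
    have "0 = l (lin_comb n (chain s v) c1 + lin_comb n B c2) ((N ^^ j) v)"
      unfolding z2 using hermitian_zero_left[OF herm chain_head_Nk_carrier] by simp
    also have "\<dots> = c1 $ j * e"
      using chain_head_Nk_carrier BYp j form_lin_comb_chain_Nk[OF c12(2) j]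
      by (simp add: hermitian_add_left[OF herm] chain_orth_def)
    finally show ?thesis using normal_chainD(4)[OF gc] by simp
  qed
  hence c1z: "c1 = 0\<^sub>v s" using c12(2) by (intro eq_vecI) auto
  hence "lin_comb n B c2 = 0\<^sub>v n" using z2 by (metis lin_comb_carrier lin_comb_zero length_chain left_zero_vec)
  hence "c2 = 0\<^sub>v (length B)" using ind c12(3) unfolding indep_vecs_def by simp
  thus "c = 0\<^sub>v (length (chain s v @ B))" using c12(1) c1z by (intro eq_vecI) auto
qed

lemma is_basis_of_chain_append:
  assumes B: "is_basis_of n chain_orth B"
  shows "is_basis_of n Y (chain s v @ B)"
proof -
  have BYp: "set B \<subseteq> chain_orth" using B unfolding is_basis_of_def by simp
  have indB: "indep_vecs n B" using is_basis_of_indep[OF B vec_subspaceD(2)[OF vec_subspace_chain_orth]] .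
  show ?thesis
  proof (rule is_basis_ofI)
    show "set (chain s v @ B) \<subseteq> Y" using chain_subset BYp chain_orth_subset by auto
    show "set (chain s v @ B) \<subseteq> carrier_vec n" using chain_carrier BYp chain_orth_carrier by auto
    show "indep_vecs n (chain s v @ B)" using indep_vecs_chain_append[OF BYp indB] .
  next
    fix w assume w: "w \<in> Y"
    have wc: "w \<in> carrier_vec n" using reducing_carrier[OF G w] .
    obtain c where c: "c \<in> carrier_vec s" "w + (-1) \<cdot>\<^sub>v lin_comb n (chain s v) c \<in> chain_orth"
      using chain_orth_projection[OF w] by auto
    obtain d where d: "d \<in> carrier_vec (length B)" "w + (-1) \<cdot>\<^sub>v lin_comb n (chain s v) c = lin_comb n B d"
      using B c(2) unfolding is_basis_of_def by blast
    have "w = lin_comb n (chain s v) c + lin_comb n B d"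
      unfolding d(2)[symmetric] using wc by (intro eq_vecI) auto
    also have "\<dots> = lin_comb n (chain s v @ B) (c @\<^sub>v d)"
      using lin_comb_append_vec[of c "chain s v" d B n] c d by simp
    finally show "\<exists>c\<in>carrier_vec (length (chain s v @ B)). w = lin_comb n (chain s v @ B) c"
      using c(1) d(1) by (intro bexI[of _ "c @\<^sub>v d"]) auto
  qed
qed

end

lemma normal_chain_length_le:
  assumes gc: "normal_chain (s', e', v')" and v': "v' \<in> U" and kill: "(N ^^ s) v' = 0\<^sub>v n"
  shows "s' \<le> s"
proof (rule ccontr)
  assume "\<not> s' \<le> s"
  hence "(N ^^ (s' - 1)) v' = (N ^^ (s' - 1 - s)) ((N ^^ s) v')" by (simp add: funpow_apply_add)
  also have "\<dots> = 0\<^sub>v n" using kill Nk_zero by simp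
  finally have "l ((N ^^ (s' - 1)) v') ((N ^^ 0) v') = 0"
    using hermitian_zero_left[OF herm U_carrier[OF v']] by simp
  thus False using normal_chainD(7)[OF gc, of "s' - 1" 0] normal_chainD(4)[OF gc] by auto
qed

lemma normal_chain_basis_reducing:
  "reducing Y \<Longrightarrow> (\<forall>B. set B \<subseteq> Y \<longrightarrow> indep_vecs n B \<longrightarrow> length B \<le> M) \<Longrightarrow>
   \<exists>Lc. normal_chain_list Lc \<and> sorted_wrt (\<ge>) (map fst Lc) \<and> (\<forall>c\<in>set Lc. snd (snd c) \<in> Y)
     \<and> is_basis_of n Y (chains Lc)"
proof (induction M arbitrary: Y rule: less_induct)
  case (less M Y)
  note G = less.prems(1) and bd = less.prems(2)
  show ?case
  proof (cases "\<forall>y\<in>Y. y = 0\<^sub>v n")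
    case True
    thus ?thesis using is_basis_of_Nil[OF True] by (intro exI[of _ "[]"]) auto
  next
    case False
    then obtain y0 where y0: "y0 \<in> Y" "y0 \<noteq> 0\<^sub>v n" by auto
    obtain s e v where gc: "normal_chain (s, e, v)" and vY: "v \<in> Y"
      and kill: "\<forall>y\<in>Y. (N ^^ s) y = 0\<^sub>v n"
      using normal_chain_exists[OF G y0] by blast
    note ctx = G gc vY
    have bdp: "\<forall>B. set B \<subseteq> chain_orth Y s v \<longrightarrow> indep_vecs n B \<longrightarrow> length B \<le> M - s"
    proof (intro allI impI)
      fix B assume B: "set B \<subseteq> chain_orth Y s v" "indep_vecs n B"
      have "indep_vecs n (chain s v @ B)" using indep_vecs_chain_append[OF ctx B] .
      moreover have "set (chain s v @ B) \<subseteq> Y" using chain_subset[OF ctx] B(1) chain_orth_subset[OF ctx] by auto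
      ultimately have "length (chain s v @ B) \<le> M" using bd by blast
      thus "length B \<le> M - s" by simp
    qed
    have "indep_vecs n (chain s v)" using indep_vecs_chain_append[OF ctx _ indep_vecs_Nil] by simp
    hence "M - s < M" using bd chain_subset[OF ctx] normal_chainD(1)[OF gc] by fastforce
    then obtain Lc' where Lc': "normal_chain_list Lc'" "sorted_wrt (\<ge>) (map fst Lc')"
      "\<forall>c\<in>set Lc'. snd (snd c) \<in> chain_orth Y s v" "is_basis_of n (chain_orth Y s v) (chains Lc')"
      using less.IH[OF _ reducing_chain_orth[OF ctx] bdp] by blast
    have "\<forall>x\<in>set (chain s v). \<forall>y\<in>set (chains Lc'). l x y = 0 \<and> l y x = 0"
      using chain_orth_orthogonal[OF ctx] Lc'(4) unfolding is_basis_of_def by blast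
    moreover have "\<forall>s'\<in>set (map fst Lc'). s' \<le> s"
      using normal_chain_length_le normal_chain_list_normal[OF Lc'(1)] Lc'(3) kill
        chain_orth_subset[OF ctx] reducing_U[OF G] by fastforce
    ultimately show ?thesis
      using gc Lc' vY chain_orth_subset[OF ctx] is_basis_of_chain_append[OF ctx Lc'(4)]
      by (intro exI[of _ "(s, e, v) # Lc'"]) auto
  qed
qed

lemma normal_chain_basis:
  assumes nd: "\<And>u. u \<in> U \<Longrightarrow> (\<forall>w\<in>U. l u w = 0) \<Longrightarrow> u = 0\<^sub>v n"
  shows "\<exists>Lc. normal_chain_list Lc \<and> sorted_wrt (\<ge>) (map fst Lc) \<and> is_basis_of n U (chains Lc)"
proof -
  have G: "reducing U" unfolding reducing_def using subspace_U K_U linear_onD(1)[OF linear_N] nd by blast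
  have "\<forall>B. set B \<subseteq> U \<longrightarrow> indep_vecs n B \<longrightarrow> length B \<le> n"
    using indep_vecs_length_le U_carrier by blast
  thus ?thesis using normal_chain_basis_reducing[OF G] by blast
qed

end

section \<open>Matrices with respect to chain bases\<close>

lemma col_zero_mat: "j < nc \<Longrightarrow> col (0\<^sub>m nr nc :: complex mat) j = 0\<^sub>v nr"
  by (intro eq_vecI) auto

lemma all_less_add_iff: "(\<forall>i < a + (b::nat). P i) \<longleftrightarrow> (\<forall>i < a. P i) \<and> (\<forall>j < b. P (a + j))"
proof (intro iffI conjI allI impI)
  fix i assume H: "(\<forall>i<a. P i) \<and> (\<forall>j<b. P (a + j))" and i: "i < a + b"
  show "P i"
  proof (cases "i < a")
    case False
    thus ?thesis using H[THEN conjunct2, rule_format, of "i - a"] i by simp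
  qed (use H in simp)
qed simp_all

lemma lin_comb_col_block_diag:
  assumes Jc: "J \<in> carrier_mat (length E) (length E)" and Cc: "C \<in> carrier_mat (length R) (length R)"
  defines "M \<equiv> four_block_mat J (0\<^sub>m (length E) (length R)) (0\<^sub>m (length R) (length E)) C"
  shows "i < length E \<Longrightarrow> lin_comb n (E @ R) (col M i) = lin_comb n E (col J i)"
    and "j < length R \<Longrightarrow> lin_comb n (E @ R) (col M (length E + j)) = lin_comb n R (col C j)"
proof -
  assume i: "i < length E"
  have "col M i = col J i @\<^sub>v 0\<^sub>v (length R)"
    using col_four_block_mat(1)[OF Jc _ _ Cc] col_zero_mat[OF i] i unfolding M_def by auto
  thus "lin_comb n (E @ R) (col M i) = lin_comb n E (col J i)"
    using lin_comb_append_vec[of "col J i" E "0\<^sub>v (length R)" R n] Jc i by simp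
next
  assume j: "j < length R"
  have "col M (length E + j) = 0\<^sub>v (length E) @\<^sub>v col C j"
    using col_four_block_mat(2)[OF Jc _ _ Cc, of _ _ "length E + j"] col_zero_mat[OF j] j unfolding M_def by auto
  thus "lin_comb n (E @ R) (col M (length E + j)) = lin_comb n R (col C j)"
    using lin_comb_append_vec[of "0\<^sub>v (length E)" E "col C j" R n] Cc j by simp
qed

lemma represents_op_block_diag:
  assumes Jc: "J \<in> carrier_mat (length E) (length E)" and Cc: "C \<in> carrier_mat (length R) (length R)"
  shows "represents_op n (E @ R) F (four_block_mat J (0\<^sub>m (length E) (length R)) (0\<^sub>m (length R) (length E)) C)
     \<longleftrightarrow> (\<forall>i<length E. F (E ! i) = lin_comb n E (col J i)) \<and> represents_op n R F C"
proof -
  let ?M = "four_block_mat J (0\<^sub>m (length E) (length R)) (0\<^sub>m (length R) (length E)) C"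
  have "?M \<in> carrier_mat (length (E @ R)) (length (E @ R))" using Jc Cc by auto
  moreover have "(\<forall>i<length (E @ R). F ((E @ R) ! i) = lin_comb n (E @ R) (col ?M i))
    \<longleftrightarrow> (\<forall>i<length E. F (E ! i) = lin_comb n E (col J i)) \<and> (\<forall>j<length R. F (R ! j) = lin_comb n R (col C j))"
    unfolding length_append all_less_add_iff using lin_comb_col_block_diag[OF Jc Cc] by (simp add: nth_append)
  ultimately show ?thesis unfolding represents_op_def using Cc by blast
qed

lemma jordan_matrix_Cons:
  "jordan_matrix ((s, a) # rest) = four_block_mat (jordan_block s a)
     (0\<^sub>m s (sum_list (map fst rest))) (0\<^sub>m (sum_list (map fst rest)) s) (jordan_matrix rest)"
  unfolding jordan_matrix_def by (simp add: Let_def jordan_matrix_dim[unfolded jordan_matrix_def])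

lemma jordan_matrix_carrier: "jordan_matrix xs \<in> carrier_mat (sum_list (map fst xs)) (sum_list (map fst xs))"
  by (simp add: carrier_matI)

lemma col_jordan_block:
  fixes a :: complex
  assumes i: "i < s"
  shows "col (jordan_block s a) i = a \<cdot>\<^sub>v unit_vec s i + (if i = 0 then 0\<^sub>v s else unit_vec s (i - 1))"
  using i by (intro eq_vecI) (auto simp: unit_vec_def algebra_simps)

lemma lin_comb_jordan_col:
  assumes E: "set E \<subseteq> carrier_vec n" and i: "i < length E"
  shows "lin_comb n E (col (jordan_block (length E) a) i) = a \<cdot>\<^sub>v E ! i + (if i = 0 then 0\<^sub>v n else E ! (i - 1))"
proof -
  let ?s = "length E"
  have c: "col (jordan_block (length E) a) i = a \<cdot>\<^sub>v unit_vec ?s i + (if i = 0 then 0\<^sub>v ?s else unit_vec ?s (i - 1))"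
    by (rule col_jordan_block[OF i])
  have "lin_comb n E (a \<cdot>\<^sub>v unit_vec ?s i + (if i = 0 then 0\<^sub>v ?s else unit_vec ?s (i - 1)))
      = lin_comb n E (a \<cdot>\<^sub>v unit_vec ?s i) + lin_comb n E (if i = 0 then 0\<^sub>v ?s else unit_vec ?s (i - 1))"
    by (rule lin_comb_add) auto
  also have "lin_comb n E (a \<cdot>\<^sub>v unit_vec ?s i) = a \<cdot>\<^sub>v E ! i"
    using lin_comb_smult[of "unit_vec ?s i" E n a] lin_comb_unit[OF E i] by simp
  also have "lin_comb n E (if i = 0 then 0\<^sub>v ?s else unit_vec ?s (i - 1)) = (if i = 0 then 0\<^sub>v n else E ! (i - 1))"
    using lin_comb_unit[OF E, of "i - 1"] i by auto
  finally show ?thesis unfolding c .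
qed

lemma represents_op_length:
  "represents_op n es F (jordan_matrix js) \<Longrightarrow> length es = sum_list (map fst js)"
  unfolding represents_op_def by (metis carrier_matD(1) jordan_matrix_carrier)

lemma represents_op_jordan_matrix_Cons:
  assumes es: "set es \<subseteq> carrier_vec n" and len: "length es = s + sum_list (map fst js)"
  shows "represents_op n es F (jordan_matrix ((s, a) # js)) \<longleftrightarrow>
    (\<forall>i<s. F (es ! i) = a \<cdot>\<^sub>v es ! i + (if i = 0 then 0\<^sub>v n else es ! (i - 1)))
    \<and> represents_op n (drop s es) F (jordan_matrix js)"
proof -
  let ?E = "take s es" and ?R = "drop s es"
  have lE: "length ?E = s" and lR: "length ?R = sum_list (map fst js)" using len by auto
  have Ec: "set ?E \<subseteq> carrier_vec n" using es by (auto dest: in_set_takeD)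
  have jm: "jordan_matrix ((s, a) # js) = four_block_mat (jordan_block (length ?E) a)
      (0\<^sub>m (length ?E) (length ?R)) (0\<^sub>m (length ?R) (length ?E)) (jordan_matrix js)"
    using jordan_matrix_Cons[of s a js] lE lR by simp
  have "jordan_matrix js \<in> carrier_mat (length ?R) (length ?R)"
    using jordan_matrix_carrier lR by metis
  from represents_op_block_diag[OF jordan_block_carrier this, of n ?E F a]
  have "represents_op n es F (jordan_matrix ((s, a) # js)) \<longleftrightarrow>
      (\<forall>i<s. F (?E ! i) = lin_comb n ?E (col (jordan_block s a) i)) \<and> represents_op n ?R F (jordan_matrix js)"
    unfolding jm append_take_drop_id lE .
  moreover have "F (?E ! i) = lin_comb n ?E (col (jordan_block s a) i) \<longleftrightarrow>
      F (es ! i) = a \<cdot>\<^sub>v es ! i + (if i = 0 then 0\<^sub>v n else es ! (i - 1))" if i: "i < s" for i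
    using lin_comb_jordan_col[OF Ec, of i a] lE i less_imp_diff_less[OF i] by simp
  ultimately show ?thesis by auto
qed

lemma form_matrix_append:
  assumes orth: "\<forall>x\<in>set E. \<forall>y\<in>set R. l x y = 0 \<and> l y x = 0"
  shows "form_matrix l (E @ R) = four_block_mat (form_matrix l E) (0\<^sub>m (length E) (length R))
     (0\<^sub>m (length R) (length E)) (form_matrix l R)"
proof (rule eq_matI)
  fix i j assume i: "i < dim_row (four_block_mat (form_matrix l E) (0\<^sub>m (length E) (length R))
     (0\<^sub>m (length R) (length E)) (form_matrix l R))"
    and j: "j < dim_col (four_block_mat (form_matrix l E) (0\<^sub>m (length E) (length R))
     (0\<^sub>m (length R) (length E)) (form_matrix l R))"
  have i': "i < length E + length R" and j': "j < length E + length R" using i j by (auto simp: form_matrix_def)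
  show "form_matrix l (E @ R) $$ (i, j) = four_block_mat (form_matrix l E) (0\<^sub>m (length E) (length R))
     (0\<^sub>m (length R) (length E)) (form_matrix l R) $$ (i, j)"
    using i' j' orth by (auto simp: form_matrix_def nth_append)
qed (auto simp: form_matrix_def)

lemma diag_block_mat_Cons':
  "diag_block_mat (X # Xs) = four_block_mat X (0\<^sub>m (dim_row X) (dim_col (diag_block_mat Xs)))
     (0\<^sub>m (dim_row (diag_block_mat Xs)) (dim_col X)) (diag_block_mat Xs)"
  by (simp add: Let_def)

context conj_nilpotent begin

lemma N_chain_nth:
  assumes Nsv: "(N ^^ s) v = 0\<^sub>v n" and i: "i < s"
  shows "N (chain s v ! i) = (if i = 0 then 0\<^sub>v n else chain s v ! (i - 1))"
proof -
  have e: "Suc (s - 1 - i) = s - i" using i by simp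
  have "N (chain s v ! i) = (N ^^ (s - i)) v" using i by (simp add: chain_nth flip: e)
  also have "\<dots> = (if i = 0 then 0\<^sub>v n else chain s v ! (i - 1))"
    using Nsv i by (auto simp: chain_nth intro: arg_cong[of _ _ "\<lambda>k. (N ^^ k) v"])
  finally show ?thesis .
qed

lemma set_chains_subset: "normal_chain_list Lc \<Longrightarrow> set (chains Lc) \<subseteq> U"
  by (induction Lc rule: normal_chain_list.induct)
    (auto simp: in_set_chain dest!: normal_chainD(2) intro!: real_vec_U real_vec_Nk)

lemma length_chains: "length (chains Lc) = sum_list (map fst Lc)"
  by (induction Lc) (auto simp: chains_def)

lemma form_matrix_chain:
  assumes gc: "normal_chain (s, e, v)"
  shows "form_matrix l (chain s v) = e \<cdot>\<^sub>m S_mat s"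
proof (rule eq_matI)
  have gram: "\<And>i j. l ((N ^^ i) v) ((N ^^ j) v) = (if i + j = s - 1 then e else 0)"
    using gc unfolding normal_chain_def by simp
  fix i j assume "i < dim_row (e \<cdot>\<^sub>m S_mat s)" "j < dim_col (e \<cdot>\<^sub>m S_mat s)"
  hence i: "i < s" and j: "j < s" by (auto simp: S_mat_def)
  have "form_matrix l (chain s v) $$ (i, j) = l ((N ^^ (s - 1 - j)) v) ((N ^^ (s - 1 - i)) v)"
    using i j by (simp add: form_matrix_def chain_nth)
  also have "\<dots> = (if (s - 1 - j) + (s - 1 - i) = s - 1 then e else 0)" by (rule gram)
  also have "\<dots> = (e \<cdot>\<^sub>m S_mat s) $$ (i, j)" using i j by (auto simp: S_mat_def)
  finally show "form_matrix l (chain s v) $$ (i, j) = (e \<cdot>\<^sub>m S_mat s) $$ (i, j)" .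
qed (auto simp: form_matrix_def S_mat_def)

lemma form_matrix_chains:
  "normal_chain_list Lc \<Longrightarrow> form_matrix l (chains Lc) = diag_block_mat (map (\<lambda>(s, e, v). e \<cdot>\<^sub>m S_mat s) Lc)"
proof (induction Lc rule: normal_chain_list.induct)
  case 1 show ?case by (auto simp: form_matrix_def intro!: eq_matI)
next
  case (2 s e v Lc)
  have dims: "dim_row (diag_block_mat (map (\<lambda>(s, e, v). e \<cdot>\<^sub>m S_mat s) Lc)) = length (chains Lc)"
    "dim_col (diag_block_mat (map (\<lambda>(s, e, v). e \<cdot>\<^sub>m S_mat s) Lc)) = length (chains Lc)"
    using 2 by (metis form_matrix_def dim_row_mat(1) dim_col_mat(1) normal_chain_list.simps(2))+
  have "form_matrix l (chains ((s, e, v) # Lc)) = form_matrix l (chain s v @ chains Lc)" by simp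
  also have "\<dots> = four_block_mat (form_matrix l (chain s v)) (0\<^sub>m (length (chain s v)) (length (chains Lc)))
     (0\<^sub>m (length (chains Lc)) (length (chain s v))) (form_matrix l (chains Lc))"
    using 2 by (intro form_matrix_append) simp
  also have "\<dots> = four_block_mat (e \<cdot>\<^sub>m S_mat s) (0\<^sub>m s (length (chains Lc)))
     (0\<^sub>m (length (chains Lc)) s) (diag_block_mat (map (\<lambda>(s, e, v). e \<cdot>\<^sub>m S_mat s) Lc))"
    using 2 form_matrix_chain[of s e v] by simp
  also have "\<dots> = diag_block_mat (map (\<lambda>(s, e, v). e \<cdot>\<^sub>m S_mat s) ((s, e, v) # Lc))"
    by (subst list.map(2), subst diag_block_mat_Cons') (simp only: dims prod.case, simp add: S_mat_def)
  finally show ?case .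
qed

lemma normal_chain_list_signs:
  assumes "normal_chain_list Lc" "k < length Lc"
  shows "fst (snd (Lc ! k)) \<in> {1, -1}"
proof -
  obtain s e v where c: "Lc ! k = (s, e, v)" by (metis prod.collapse)
  have "normal_chain (s, e, v)" using normal_chain_list_normal[OF assms(1)] nth_mem[OF assms(2)] c by metis
  thus ?thesis using normal_chainD(3) c by auto
qed

lemma form_matrix_chains_nth:
  assumes "normal_chain_list Lc"
  shows "form_matrix l (chains Lc)
     = diag_block_mat (map (\<lambda>k. fst (snd (Lc ! k)) \<cdot>\<^sub>m S_mat (fst (Lc ! k))) [0..<length Lc])"
proof -
  have "map (\<lambda>(s, e, v). e \<cdot>\<^sub>m S_mat s) Lc = map (\<lambda>k. fst (snd (Lc ! k)) \<cdot>\<^sub>m S_mat (fst (Lc ! k))) [0..<length Lc]"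
    by (rule nth_equalityI) (auto simp: case_prod_beta)
  thus ?thesis using form_matrix_chains[OF assms] by simp
qed

end

section \<open>Chain lengths are determined by the ranks of the powers\<close>

lemma zero_append_zero_vec: "0\<^sub>v a @\<^sub>v 0\<^sub>v b = (0\<^sub>v (a + b) :: 'a :: zero vec)"
  by (intro eq_vecI) auto

lemma indep_vecs_drop_middle:
  assumes ind: "indep_vecs n (P @ Q @ R)"
  shows "indep_vecs n (P @ R)"
  unfolding indep_vecs_def
proof (intro ballI impI)
  fix c assume c: "c \<in> carrier_vec (length (P @ R))" and z: "lin_comb n (P @ R) c = 0\<^sub>v n"
  define c1 where "c1 = vec_first c (length P)"
  define c2 where "c2 = vec_last c (length R)"
  have c12: "c = c1 @\<^sub>v c2" "c1 \<in> carrier_vec (length P)" "c2 \<in> carrier_vec (length R)"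
    using c unfolding c1_def c2_def by auto
  define d where "d = c1 @\<^sub>v (0\<^sub>v (length Q) @\<^sub>v c2)"
  have d: "d \<in> carrier_vec (length (P @ Q @ R))" unfolding d_def using c12 by auto
  have "lin_comb n (P @ Q @ R) d = lin_comb n P c1 + (lin_comb n Q (0\<^sub>v (length Q)) + lin_comb n R c2)"
    unfolding d_def using c12 by (simp add: lin_comb_append_vec)
  also have "\<dots> = lin_comb n (P @ R) c" using c12 by (simp add: lin_comb_append_vec)
  finally have "d = 0\<^sub>v (length P + (length Q + length R))" using ind z d unfolding indep_vecs_def by simp
  hence "c1 = 0\<^sub>v (length P)" "0\<^sub>v (length Q) @\<^sub>v c2 = 0\<^sub>v (length Q) @\<^sub>v 0\<^sub>v (length R)"
    unfolding d_def zero_append_zero_vec[symmetric] using c12 by simp_all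
  moreover from this(2) have "c2 = 0\<^sub>v (length R)" using append_vec_eq[OF zero_carrier_vec zero_carrier_vec] by blast
  ultimately show "c = 0\<^sub>v (length (P @ R))" using c12(1) zero_append_zero_vec by simp
qed

text \<open>es is the concatenation of F-chains of the lengths ss; each chain is listed starting
  from its vector in the kernel of F, so F maps every vector to its predecessor.\<close>
fun is_chain_list :: "nat \<Rightarrow> (complex vec \<Rightarrow> complex vec) \<Rightarrow> complex vec list \<Rightarrow> nat list \<Rightarrow> bool" where
  "is_chain_list n F es [] = (es = [])"
| "is_chain_list n F es (s # ss) = (s \<le> length es \<and> (\<forall>i<s. F (es ! i) = (if i = 0 then 0\<^sub>v n else es ! (i - 1)))
     \<and> is_chain_list n F (drop s es) ss)"

text \<open>The first s - k vectors of each chain, which form a basis of the image of F^k.\<close>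
fun trunc_chains :: "nat \<Rightarrow> complex vec list \<Rightarrow> nat list \<Rightarrow> complex vec list" where
  "trunc_chains k es [] = []"
| "trunc_chains k es (s # ss) = take (s - k) es @ trunc_chains k (drop s es) ss"

lemma length_trunc_chains: "is_chain_list n F es ss \<Longrightarrow> length (trunc_chains k es ss) = sum_list (map (\<lambda>s. s - k) ss)"
  by (induction ss arbitrary: es) auto

lemma indep_vecs_trunc_chains: "is_chain_list n F es ss \<Longrightarrow> indep_vecs n (P @ es) \<Longrightarrow> indep_vecs n (P @ trunc_chains k es ss)"
proof (induction ss arbitrary: es P)
  case (Cons s ss)
  have "take s es = take (s - k) es @ drop (s - k) (take s es)"
    by (metis append_take_drop_id diff_le_self min.absorb1 take_take)
  hence "indep_vecs n ((P @ take (s - k) es) @ drop (s - k) (take s es) @ drop s es)"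
    using Cons.prems(2) by (metis append.assoc append_take_drop_id)
  hence "indep_vecs n ((P @ take (s - k) es) @ drop s es)" by (rule indep_vecs_drop_middle)
  thus ?case using Cons.IH[of "drop s es" "P @ take (s - k) es"] Cons.prems(1) by simp
qed simp

lemma chain_funpow:
  assumes b: "\<forall>i<s. F (es ! i) = (if i = 0 then 0\<^sub>v n else es ! (i - 1))" and F0: "F (0\<^sub>v n) = 0\<^sub>v n"
  shows "i < s \<Longrightarrow> (F ^^ k) (es ! i) = (if i < k then 0\<^sub>v n else es ! (i - k))"
proof (induction k)
  case (Suc k)
  show ?case
  proof (cases "i < k")
    case True thus ?thesis using Suc F0 by simp
  next
    case False
    have "(F ^^ Suc k) (es ! i) = F (es ! (i - k))" using Suc False by simp
    also have "\<dots> = (if i - k = 0 then 0\<^sub>v n else es ! (i - k - 1))" using b Suc.prems by simp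
    finally show ?thesis using False by auto
  qed
qed simp

lemma trunc_chains_image:
  assumes "is_chain_list n F es ss" "set es \<subseteq> S" "\<forall>x\<in>S. F x \<in> S" "F (0\<^sub>v n) = 0\<^sub>v n"
  shows "set (trunc_chains k es ss) \<subseteq> (F ^^ k) ` S"
  using assms
proof (induction ss arbitrary: es)
  case (Cons s ss)
  have b: "\<forall>i<s. F (es ! i) = (if i = 0 then 0\<^sub>v n else es ! (i - 1))" and sl: "s \<le> length es"
    using Cons.prems by auto
  have "set (take (s - k) es) \<subseteq> (F ^^ k) ` S"
  proof
    fix x assume "x \<in> set (take (s - k) es)"
    then obtain j where j: "j < s - k" "x = es ! j" using sl by (auto simp: in_set_conv_nth)
    have "(F ^^ k) (es ! (j + k)) = es ! j" using chain_funpow[OF b Cons.prems(4), of "j + k" k] j by simp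
    moreover have "es ! (j + k) \<in> S" using Cons.prems(2) j sl by (auto intro: nth_mem)
    ultimately show "x \<in> (F ^^ k) ` S" using j by (metis image_eqI)
  qed
  moreover have "set (trunc_chains k (drop s es) ss) \<subseteq> (F ^^ k) ` S"
    using Cons.IH Cons.prems by (meson is_chain_list.simps(2) set_drop_subset subset_trans)
  ultimately show ?case by simp
qed simp

lemma lin_comb_funpow_chain:
  assumes b: "\<forall>i<s. F (E ! i) = (if i = 0 then 0\<^sub>v n else E ! (i - 1))" and F0: "F (0\<^sub>v n) = 0\<^sub>v n"
    and lE: "length E = s" and E: "set E \<subseteq> carrier_vec n"
  shows "lin_comb n (map (F ^^ k) E) c = lin_comb n (take (s - k) E) (vec (s - k) (\<lambda>j. c $ (k + j)))"
proof (rule eq_vecI)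
  fix t assume "t < dim_vec (lin_comb n (take (s - k) E) (vec (s - k) (\<lambda>j. c $ (k + j))))"
  hence t: "t < n" by simp
  have "lin_comb n (map (F ^^ k) E) c $ t = (\<Sum>i<s. c $ i * (if i < k then 0 else E ! (i - k) $ t))"
    using t lE chain_funpow[OF b F0] E
    by (simp add: lin_comb_index, intro sum.cong) (auto simp: nth_mem subset_iff carrier_vecD)
  also have "\<dots> = (\<Sum>j<s - k. c $ (k + j) * E ! j $ t)"
  proof (cases "s \<le> k")
    case False
    hence "(\<Sum>i<s. c $ i * (if i < k then 0 else E ! (i - k) $ t))
        = (\<Sum>i<k + (s - k). c $ i * (if i < k then 0 else E ! (i - k) $ t))" by simp
    thus ?thesis by (simp only: sum_split_add) simp
  qed simp
  also have "\<dots> = lin_comb n (take (s - k) E) (vec (s - k) (\<lambda>j. c $ (k + j))) $ t"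
    using t lE unfolding lin_comb_index[OF t] by (intro sum.cong) auto
  finally show "lin_comb n (map (F ^^ k) E) c $ t = lin_comb n (take (s - k) E) (vec (s - k) (\<lambda>j. c $ (k + j))) $ t" .
qed simp

lemma trunc_chains_span:
  assumes "is_chain_list n F es ss" "set es \<subseteq> S" "vec_subspace n S" "linear_on n S F" "c \<in> carrier_vec (length es)"
  shows "\<exists>d\<in>carrier_vec (length (trunc_chains k es ss)). lin_comb n (map (F ^^ k) es) c = lin_comb n (trunc_chains k es ss) d"
  using assms
proof (induction ss arbitrary: es c)
  case Nil thus ?case by (intro bexI[of _ "0\<^sub>v 0"]) (auto intro: eq_vecI simp: lin_comb_def)
next
  case (Cons s ss)
  note S = Cons.prems(3) and F = Cons.prems(4)
  have b: "\<forall>i<s. F (take s es ! i) = (if i = 0 then 0\<^sub>v n else take s es ! (i - 1))" and sl: "s \<le> length es"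
    and csR: "is_chain_list n F (drop s es) ss" using Cons.prems by auto
  have Ec: "set (take s es) \<subseteq> carrier_vec n" and RS: "set (drop s es) \<subseteq> S"
    using Cons.prems(2) vec_subspaceD(1)[OF S] by (auto dest: in_set_takeD in_set_dropD)
  define c1 where "c1 = vec_first c s"
  define c2 where "c2 = vec_last c (length es - s)"
  have c12: "c = c1 @\<^sub>v c2" "c1 \<in> carrier_vec (length (take s es))" "c2 \<in> carrier_vec (length (drop s es))"
    using Cons.prems(5) sl unfolding c1_def c2_def by auto
  obtain d2 where d2: "d2 \<in> carrier_vec (length (trunc_chains k (drop s es) ss))"
    "lin_comb n (map (F ^^ k) (drop s es)) c2 = lin_comb n (trunc_chains k (drop s es) ss) d2"
    using Cons.IH[OF csR RS S F c12(3)] by blast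
  define d1 where "d1 = vec (s - k) (\<lambda>j. c1 $ (k + j))"
  have d1c: "d1 \<in> carrier_vec (length (take (s - k) es))" unfolding d1_def using sl by simp
  have "lin_comb n (map (F ^^ k) es) c
      = lin_comb n (map (F ^^ k) (take s es)) c1 + lin_comb n (map (F ^^ k) (drop s es)) c2"
    using c12 lin_comb_append_vec[of c1 "map (F ^^ k) (take s es)" c2 "map (F ^^ k) (drop s es)" n]
    by (simp flip: map_append)
  also have "\<dots> = lin_comb n (take (s - k) es) d1 + lin_comb n (trunc_chains k (drop s es) ss) d2"
    using lin_comb_funpow_chain[OF b linear_on_zero[OF S F] _ Ec] sl d2(2) unfolding d1_def by simp
  also have "\<dots> = lin_comb n (trunc_chains k es (s # ss)) (d1 @\<^sub>v d2)"
    using lin_comb_append_vec[OF d1c d2(1)] by simp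
  finally show ?case using append_carrier_vec[OF d1c d2(1)] by auto
qed

lemma length_trunc_chains_mono:
  assumes cs1: "is_chain_list n F es ss" and cs2: "is_chain_list n F' es' ss'"
    and S: "vec_subspace n S" and F: "linear_on n S F" and F': "linear_on n S F'"
    and es: "set es \<subseteq> S" and es': "set es' \<subseteq> S"
    and ind: "indep_vecs n es" and span': "\<And>x. x \<in> S \<Longrightarrow> \<exists>c\<in>carrier_vec (length es'). x = lin_comb n es' c"
    and img: "(F ^^ k) ` S = (F' ^^ k) ` S"
  shows "sum_list (map (\<lambda>s. s - k) ss) \<le> sum_list (map (\<lambda>s. s - k) ss')"
proof -
  have Sc: "S \<subseteq> carrier_vec n" using vec_subspaceD(1)[OF S] .
  have F0: "F (0\<^sub>v n) = 0\<^sub>v n" using linear_on_zero[OF S F] .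
  have ind1: "indep_vecs n (trunc_chains k es ss)" using indep_vecs_trunc_chains[OF cs1, of "[]" k] ind by simp
  have sub1: "set (trunc_chains k es ss) \<subseteq> (F ^^ k) ` S"
    using trunc_chains_image[OF cs1 es _ F0] linear_onD(1)[OF F] by blast
  have c1: "set (trunc_chains k es ss) \<subseteq> carrier_vec n"
    using sub1 linear_onD(1)[OF linear_on_funpow[OF F]] Sc by blast
  have c2: "set (trunc_chains k es' ss') \<subseteq> carrier_vec n"
    using trunc_chains_image[OF cs2 es' _ linear_on_zero[OF S F']] linear_onD(1)[OF F'] linear_onD(1)[OF linear_on_funpow[OF F']] Sc
    by blast
  have "length (trunc_chains k es ss) \<le> length (trunc_chains k es' ss')"
  proof (rule indep_vecs_length_le_span[OF c1 ind1 c2])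
    fix x assume "x \<in> set (trunc_chains k es ss)"
    hence "x \<in> (F' ^^ k) ` S" using sub1 img by auto
    then obtain y where y: "y \<in> S" "x = (F' ^^ k) y" by auto
    obtain c where c: "c \<in> carrier_vec (length es')" "y = lin_comb n es' c" using span' y(1) by blast
    have "x = lin_comb n (map (F' ^^ k) es') c" unfolding y(2) c(2)
      by (rule linear_on_lin_comb[OF S linear_on_funpow[OF F'] es'])
    thus "\<exists>c\<in>carrier_vec (length (trunc_chains k es' ss')). x = lin_comb n (trunc_chains k es' ss') c"
      using trunc_chains_span[OF cs2 es' S F' c(1), of k] by auto
  qed
  thus ?thesis using length_trunc_chains[OF cs1] length_trunc_chains[OF cs2] by simp
qed

lemma sum_list_diff_Suc: "sum_list (map (\<lambda>s. s - k) (xs :: nat list)) = sum_list (map (\<lambda>s. s - Suc k) xs) + length (filter (\<lambda>s. s > k) xs)"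
  by (induction xs) auto

lemma length_filter_gt_eq:
  assumes "\<forall>k. sum_list (map (\<lambda>s. s - k) xs) = sum_list (map (\<lambda>s. s - k) (ys :: nat list))"
  shows "length (filter (\<lambda>s. s > k) xs) = length (filter (\<lambda>s. s > k) ys)"
  using assms sum_list_diff_Suc[of k xs] sum_list_diff_Suc[of k ys] by auto

lemma length_filter_gt_Suc: "length (filter (\<lambda>s. s > k) (xs :: nat list)) = length (filter (\<lambda>s. s > Suc k) xs) + count (mset xs) (Suc k)"
  by (induction xs) auto

lemma sorted_nat_lists_eq:
  assumes sx: "sorted_wrt (\<ge>) xs" and sy: "sorted_wrt (\<ge>) (ys :: nat list)"
    and px: "\<forall>x\<in>set xs. x > 0" and py: "\<forall>y\<in>set ys. y > 0"
    and eq: "\<forall>k. sum_list (map (\<lambda>s. s - k) xs) = sum_list (map (\<lambda>s. s - k) ys)"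
  shows "xs = ys"
proof -
  have cnt: "\<And>a. count (mset xs) a = count (mset ys) a"
  proof -
    fix a show "count (mset xs) a = count (mset ys) a"
    proof (cases a)
      case 0
      have "0 \<notin> set xs" "0 \<notin> set ys" using px py by auto
      thus ?thesis using 0 by (metis count_eq_zero_iff set_mset_mset)
    next
      case (Suc k)
      thus ?thesis using length_filter_gt_Suc[of k xs] length_filter_gt_Suc[of k ys]
        length_filter_gt_eq[OF eq, of k] length_filter_gt_eq[OF eq, of "Suc k"] by simp
    qed
  qed
  hence "mset xs = mset ys" by (simp add: multiset_eq_iff)
  hence m: "mset (rev xs) = mset (rev ys)" by simp
  have s1: "sorted (rev xs)" using sx unfolding sorted_wrt_rev by simp
  have s2: "sorted (rev ys)" using sy unfolding sorted_wrt_rev by simp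
  have a: "sort (rev ys) = rev xs" by (rule properties_for_sort[OF m s1])
  have b: "sort (rev ys) = rev ys" by (rule sorted_sort_id[OF s2])
  have "rev xs = rev ys" using a b by simp
  thus ?thesis by simp
qed

context conj_nilpotent begin

lemma is_chain_list_chains: "normal_chain_list Lc \<Longrightarrow> is_chain_list n N (chains Lc) (map fst Lc)"
proof (induction Lc rule: normal_chain_list.induct)
  case (2 s e v Lc)
  have "normal_chain (s, e, v)" using 2 by simp
  hence "\<forall>i<s. N ((chain s v @ chains Lc) ! i) = (if i = 0 then 0\<^sub>v n else (chain s v @ chains Lc) ! (i - 1))"
    using N_chain_nth[OF normal_chainD(6)] less_imp_diff_less by (simp add: nth_append)
  moreover have "is_chain_list n N (drop s (chain s v @ chains Lc)) (map fst Lc)" using 2 by simp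
  ultimately show ?case unfolding chains_Cons list.map fst_conv is_chain_list.simps(2) by simp
qed simp

end

sublocale antilinear_selfadjoint \<subseteq> cr: conj_nilpotent n l U K N
  using herm vec_subspace_U antilinear_K K_involution K_self_adjoint linear_N K_N_commute
    N_self_adjoint N_nilpotent by unfold_locales auto

lemma block_sizes_Cons[simp]: "block_sizes ((s, r) # sr) = replicate r s @ block_sizes sr"
  unfolding block_sizes_def by simp

lemma block_sizes_set: "x \<in> set (block_sizes sr) \<Longrightarrow> x \<in> fst ` set sr"
  unfolding block_sizes_def by (auto split: prod.splits) (metis fst_conv rev_image_eqI)

lemma block_sizes_sorted: "sorted_wrt (>) (map fst sr) \<Longrightarrow> sorted_wrt (\<ge>) (block_sizes sr)"
proof (induction sr)
  case (Cons p sr)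
  obtain s r where p: "p = (s, r)" by (cases p)
  have "\<forall>y\<in>set (block_sizes sr). y \<le> s"
    using Cons.prems block_sizes_set unfolding p by fastforce
  moreover have "sorted_wrt (\<ge>) (replicate r s)" by (simp add: sorted_wrt_iff_nth_less)
  ultimately show ?case using Cons unfolding p by (auto simp: sorted_wrt_append)
qed (simp add: block_sizes_def)

lemma block_sizes_pos: "\<forall>p\<in>set sr. fst p > 0 \<and> snd p > 0 \<Longrightarrow> \<forall>x\<in>set (block_sizes sr). x > 0"
  using block_sizes_set by fastforce

context antilinear_selfadjoint begin

lemma A_real_vec:
  assumes x: "cr.real_vec x"
  shows "A x = complex_of_real L \<cdot>\<^sub>v x + N x"
proof -
  have xU: "x \<in> U" and Kx: "K x = x" using x unfolding cr.real_vec_def by auto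
  have yU: "complex_of_real (1/L) \<cdot>\<^sub>v N x \<in> U"
    using vec_subspaceD(4)[OF vec_subspace_U] cr.Nk_U[OF xU, of 1] by simp
  have "A x = complex_of_real L \<cdot>\<^sub>v K (x + complex_of_real (1/L) \<cdot>\<^sub>v N x)"
    using A_eq_K_R[OF xU] R_eq_N U_carrier[OF xU] by simp
  also have "K (x + complex_of_real (1/L) \<cdot>\<^sub>v N x) = x + complex_of_real (1/L) \<cdot>\<^sub>v N x"
    using antilinear_onD(2,3)[OF antilinear_K] xU yU cr.Nk_U[OF xU, of 1] Kx
      cr.real_vec_Nk[OF x, of 1] unfolding cr.real_vec_def by simp
  finally show ?thesis
    using U_carrier[OF xU] U_carrier[OF cr.Nk_U[OF xU, of 1]] L_pos by (intro eq_vecI) (auto simp: field_simps)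
qed

lemma represents_A_chains:
  "cr.normal_chain_list Lc \<Longrightarrow> represents_op n (cr.chains Lc) A (jordan_matrix (map (\<lambda>s. (s, complex_of_real L)) (map fst Lc)))"
proof (induction Lc rule: cr.normal_chain_list.induct)
  case 1 show ?case unfolding represents_op_def by (simp add: jordan_matrix_def carrier_matI)
next
  case (2 s e v Lc)
  have "cr.normal_chain (s, e, v)" using 2 by simp
  note gc = cr.normal_chainD[OF this]
  let ?es = "cr.chain s v @ cr.chains Lc"
  have "A (?es ! i) = complex_of_real L \<cdot>\<^sub>v ?es ! i + (if i = 0 then 0\<^sub>v n else ?es ! (i - 1))"
    if i: "i < s" for i
    using A_real_vec cr.real_vec_Nk[OF gc(2)] cr.N_chain_nth[OF gc(6) i] i less_imp_diff_less[OF i]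
    by (simp add: cr.chain_nth nth_append)
  moreover have "set ?es \<subseteq> carrier_vec n"
    using cr.set_chains_subset[OF 2(2)] U_carrier by auto
  ultimately show ?case using 2 represents_op_jordan_matrix_Cons
    by (simp add: cr.length_chains comp_def)
qed

lemma is_chain_list_jordan:
  "set es \<subseteq> carrier_vec n \<Longrightarrow> represents_op n es (\<lambda>v. A (A v)) (jordan_matrix (map (\<lambda>s. (s, mu)) bs))
     \<Longrightarrow> is_chain_list n T es bs"
proof (induction bs arbitrary: es)
  case Nil thus ?case using represents_op_length by fastforce
next
  case (Cons s bs)
  have len: "length es = s + sum_list (map fst (map (\<lambda>s. (s, mu)) bs))"
    using represents_op_length[OF Cons.prems(2)] by simp
  have AA: "\<forall>i<s. A (A (es ! i)) = mu \<cdot>\<^sub>v es ! i + (if i = 0 then 0\<^sub>v n else es ! (i - 1))"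
    and rep: "represents_op n (drop s es) (\<lambda>v. A (A v)) (jordan_matrix (map (\<lambda>s. (s, mu)) bs))"
    using Cons.prems represents_op_jordan_matrix_Cons[OF Cons.prems(1) len] by auto
  have "T (es ! i) = (if i = 0 then 0\<^sub>v n else es ! (i - 1))" if i: "i < s" for i
  proof -
    have "es ! i \<in> carrier_vec n" "(if i = 0 then 0\<^sub>v n else es ! (i - 1)) \<in> carrier_vec n"
      using Cons.prems(1) i len by (auto simp: nth_mem subset_iff)
    thus ?thesis unfolding T_def using AA i by (intro eq_vecI) auto
  qed
  moreover have "is_chain_list n T (drop s es) bs"
    using Cons.IH[OF _ rep] Cons.prems(1) by (meson in_set_dropD subset_iff)
  ultimately show ?case using len by simp
qed

lemma chain_sizes_eq:
  assumes es0: "is_basis_of n U es0"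
    and rep0: "represents_op n es0 (\<lambda>v. A (A v)) (jordan_matrix (map (\<lambda>s. (s, mu)) bs))"
    and gl: "cr.normal_chain_list Lc" and bas: "is_basis_of n U (cr.chains Lc)"
    and sbs: "sorted_wrt (\<ge>) bs" and pbs: "\<forall>x\<in>set bs. x > 0"
    and sLc: "sorted_wrt (\<ge>) (map fst Lc)"
  shows "map fst Lc = bs"
proof -
  have es0U: "set es0 \<subseteq> U" using es0 unfolding is_basis_of_def by simp
  have chU: "set (cr.chains Lc) \<subseteq> U" using cr.set_chains_subset[OF gl] .
  have cs1: "is_chain_list n T es0 bs" using is_chain_list_jordan[OF _ rep0] es0U U_carrier by blast
  have cs2: "is_chain_list n N (cr.chains Lc) (map fst Lc)" by (rule cr.is_chain_list_chains[OF gl])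
  have ind1: "indep_vecs n es0" using is_basis_of_indep[OF es0 vec_subspaceD(2)[OF vec_subspace_U]] .
  have ind2: "indep_vecs n (cr.chains Lc)" using is_basis_of_indep[OF bas vec_subspaceD(2)[OF vec_subspace_U]] .
  have "sum_list (map (\<lambda>s. s - k) (map fst Lc)) = sum_list (map (\<lambda>s. s - k) bs)" for k
    using length_trunc_chains_mono[OF cs2 cs1 vec_subspace_U linear_N linear_T_U chU es0U ind2
        is_basis_of_span[OF es0] image_Tk_eq_image_Nk[symmetric]]
      length_trunc_chains_mono[OF cs1 cs2 vec_subspace_U linear_T_U linear_N es0U chU ind1
        is_basis_of_span[OF bas] image_Tk_eq_image_Nk]
    by (rule antisym)
  moreover have "\<forall>x\<in>set (map fst Lc). x > 0"
    using cr.normal_chain_list_normal[OF gl] cr.normal_chainD(1) by fastforce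
  ultimately show ?thesis using sorted_nat_lists_eq[OF sLc sbs _ pbs] by blast
qed

lemma normal_chain_basis_sizes:
  assumes es0: "is_basis_of n U es0"
    and rep0: "represents_op n es0 (\<lambda>v. A (A v)) (jordan_matrix (map (\<lambda>s. (s, mu)) bs))"
    and sbs: "sorted_wrt (\<ge>) bs" and pbs: "\<forall>x\<in>set bs. x > 0"
  obtains Lc where "cr.normal_chain_list Lc" "is_basis_of n U (cr.chains Lc)" "map fst Lc = bs"
proof -
  obtain Lc where gl: "cr.normal_chain_list Lc" and sLc: "sorted_wrt (\<ge>) (map fst Lc)"
    and bas: "is_basis_of n U (cr.chains Lc)"
    using cr.normal_chain_basis nondegenerate_U by blast
  thus ?thesis using that chain_sizes_eq[OF es0 rep0 gl bas sbs pbs sLc] by blast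
qed

end

theorem mainTheorem11:
  fixes n :: nat
    and l :: "complex vec \<Rightarrow> complex vec \<Rightarrow> complex"
    and A :: "complex vec \<Rightarrow> complex vec"
    and lam :: real
    and sr :: "(nat \<times> nat) list"
  assumes herm: "hermitian_form n l"
    and nondeg: "nondegenerate n l"
    and anti: "antilinear_op n A"
    and sa: "self_adjoint_wrt n l A"
    and pos: "lam\<^sup>2 > 0"
    and eig: "\<exists>v\<in>carrier_vec n. v \<noteq> 0\<^sub>v n \<and> A (A v) = complex_of_real (lam\<^sup>2) \<cdot>\<^sub>v v"
    and sizes_pos: "\<forall>p\<in>set sr. fst p > 0 \<and> snd p > 0"
    and sizes_dec: "sorted_wrt (>) (map fst sr)"
    and jordan: "\<exists>es. is_basis_of n (gen_eigenspace n A (complex_of_real (lam\<^sup>2))) es \<and>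
        represents_op n es (\<lambda>v. A (A v))
          (jordan_matrix (map (\<lambda>s. (s, complex_of_real (lam\<^sup>2))) (block_sizes sr)))"
  shows "\<exists>es eps. is_basis_of n (gen_eigenspace n A (complex_of_real (lam\<^sup>2))) es \<and>
     (\<forall>k<length (block_sizes sr). eps k \<in> {1, -1 :: complex}) \<and>
     form_matrix l es =
       diag_block_mat (map (\<lambda>k. eps k \<cdot>\<^sub>m S_mat (block_sizes sr ! k)) [0..<length (block_sizes sr)]) \<and>
     represents_op n es A
       (jordan_matrix (map (\<lambda>s. (s, complex_of_real \<bar>lam\<bar>)) (block_sizes sr)))"
proof -
  interpret antilinear_selfadjoint n l A lam by (rule antilinear_selfadjoint.intro[OF herm nondeg anti sa pos])
  obtain es0 where "is_basis_of n U es0"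
    and "represents_op n es0 (\<lambda>v. A (A v)) (jordan_matrix (map (\<lambda>s. (s, mu)) (block_sizes sr)))"
    using jordan unfolding U_def mu_def by blast
  then obtain Lc where gl: "cr.normal_chain_list Lc" and bas: "is_basis_of n U (cr.chains Lc)"
    and sizes: "map fst Lc = block_sizes sr"
    using normal_chain_basis_sizes block_sizes_sorted[OF sizes_dec] block_sizes_pos[OF sizes_pos] by metis
  define eps where "eps k = fst (snd (Lc ! k))" for k
  have len: "length (block_sizes sr) = length Lc" using sizes by (metis length_map)
  have signs: "\<forall>k<length (block_sizes sr). eps k \<in> {1, -1}"
    using cr.normal_chain_list_signs[OF gl] unfolding eps_def len by blast
  have blocks: "map (\<lambda>k. eps k \<cdot>\<^sub>m S_mat (block_sizes sr ! k)) [0..<length (block_sizes sr)]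
      = map (\<lambda>k. fst (snd (Lc ! k)) \<cdot>\<^sub>m S_mat (fst (Lc ! k))) [0..<length Lc]"
    unfolding eps_def len sizes[symmetric] by simp
  have rep: "represents_op n (cr.chains Lc) A
      (jordan_matrix (map (\<lambda>s. (s, complex_of_real \<bar>lam\<bar>)) (block_sizes sr)))"
    using represents_A_chains[OF gl] unfolding sizes L_def .
  show ?thesis
    using bas signs rep cr.form_matrix_chains_nth[OF gl] unfolding U_def mu_def
    by (intro exI[of _ "cr.chains Lc"] exI[of _ eps]) (simp add: blocks)
qed

end
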